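(* Let $X\subseteq\mathbb C^2$ be an irreducible curve. (1) $\Sigma_X^\infty$ is one-dimensional if and only if $X$ is a line with direction vector $(i,-1)^\top$ or $(i,1)^\top$; in this case $\Sigma_X^\infty=X$. (2) $\Sigma_X^\infty$ is zero-dimensional if and only if $X=\{(x_1,x_2):(x_1-c_1)^2+(x_2-c_2)^2=r^2\}$ for some $c=(c_1,c_2)\in\mathbb C^2$ and $r\neq0$; in this case $\Sigma_X^\infty=\{c\}$. (3) For all other irreducible curves $X\subseteq\mathbb C^2$, $\Sigma_X^\infty=\emptyset$.
   Context: For $x,y\in\mathbb C^2$, $x\cdot y=x_1y_1+x_2y_2$ (complex bilinear), $i=\sqrt{-1}$. For $x\in X_{\mathrm{reg}}$ (smooth locus), $N_xX$ is the span of gradients at $x$ of generators of the ideal of $X$. The ED correspondence $\mathcal E_X$ is the Zariski closure of $\{(x,u):x\in X_{\mathrm{reg}},u-x\in N_xX\}$, $\mathcal E_X(u)=\{x:(x,u)\in\mathcal E_X\}$, and $\Sigma_X^\infty=\{u:\dim\mathcal E_X(u)\ge1\}$. *)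

theory Defs
  imports "HOL-Analysis.Analysis"
begin

inductive polyfun :: "('a \<Rightarrow> complex) set \<Rightarrow> ('a \<Rightarrow> complex) \<Rightarrow> bool" for C where
  pf_const: "polyfun C (\<lambda>_. c)"
| pf_coord: "f \<in> C \<Longrightarrow> polyfun C f"
| pf_add: "polyfun C f \<Longrightarrow> polyfun C g \<Longrightarrow> polyfun C (\<lambda>x. f x + g x)"
| pf_mult: "polyfun C f \<Longrightarrow> polyfun C g \<Longrightarrow> polyfun C (\<lambda>x. f x * g x)"

definition C2 :: "(complex \<times> complex \<Rightarrow> complex) set" where
  "C2 = {fst, snd}"

definition C4 :: "((complex \<times> complex) \<times> (complex \<times> complex) \<Rightarrow> complex) set" where
  "C4 = {\<lambda>p. fst (fst p), \<lambda>p. snd (fst p), \<lambda>p. fst (snd p), \<lambda>p. snd (snd p)}"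

definition zclosed :: "('a \<Rightarrow> complex) set \<Rightarrow> 'a set \<Rightarrow> bool" where
  "zclosed C S \<longleftrightarrow> (\<exists>F. (\<forall>f\<in>F. polyfun C f) \<and> S = {x. \<forall>f\<in>F. f x = 0})"

definition zcl :: "('a \<Rightarrow> complex) set \<Rightarrow> 'a set \<Rightarrow> 'a set" where
  "zcl C S = \<Inter>{T. zclosed C T \<and> S \<subseteq> T}"

definition zirred :: "('a \<Rightarrow> complex) set \<Rightarrow> 'a set \<Rightarrow> bool" where
  "zirred C S \<longleftrightarrow> zclosed C S \<and> S \<noteq> {} \<and>
     (\<forall>A B. zclosed C A \<and> zclosed C B \<and> S \<subseteq> A \<union> B \<longrightarrow> S \<subseteq> A \<or> S \<subseteq> B)"

definition zdim :: "('a \<Rightarrow> complex) set \<Rightarrow> 'a set \<Rightarrow> int" where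
  "zdim C S = (if S = {} then -1 else int (Sup {n::nat. \<exists>Z::nat \<Rightarrow> 'a set.
      (\<forall>i\<le>n. zirred C (Z i)) \<and> (\<forall>i<n. Z i \<subset> Z (Suc i)) \<and> Z n \<subseteq> zcl C S}))"

definition vanishing :: "('a \<Rightarrow> complex) set \<Rightarrow> 'a set \<Rightarrow> ('a \<Rightarrow> complex) set" where
  "vanishing C S = {f. polyfun C f \<and> (\<forall>x\<in>S. f x = 0)}"

definition grad :: "(complex \<times> complex \<Rightarrow> complex) \<Rightarrow> complex \<times> complex \<Rightarrow> complex \<times> complex" where
  "grad f x = (deriv (\<lambda>t. f (t, snd x)) (fst x), deriv (\<lambda>t. f (fst x, t)) (snd x))"

definition normal_space :: "(complex \<times> complex) set \<Rightarrow> complex \<times> complex \<Rightarrow> (complex \<times> complex) set" where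
  "normal_space X x = {v. \<exists>(cs::complex list) fs. length cs = length fs \<and>
      set fs \<subseteq> vanishing C2 X \<and>
      v = ((\<Sum>i<length fs. cs!i * fst (grad (fs!i) x)),
           (\<Sum>i<length fs. cs!i * snd (grad (fs!i) x)))}"

definition cdim2 :: "(complex \<times> complex) set \<Rightarrow> int" where
  "cdim2 N = (if N \<subseteq> {(0,0)} then 0
      else if (\<exists>v\<in>N. \<exists>w\<in>N. fst v * snd w - snd v * fst w \<noteq> 0) then 2 else 1)"

definition reg :: "(complex \<times> complex) set \<Rightarrow> (complex \<times> complex) set" where
  "reg X = {x\<in>X. cdim2 (normal_space X x) = 2 - zdim C2 X}"

definition ED_corr :: "(complex \<times> complex) set \<Rightarrow> ((complex \<times> complex) \<times> (complex \<times> complex)) set" where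
  "ED_corr X = zcl C4 {(x, u). x \<in> reg X \<and> (fst u - fst x, snd u - snd x) \<in> normal_space X x}"

definition ED_fiber :: "(complex \<times> complex) set \<Rightarrow> complex \<times> complex \<Rightarrow> (complex \<times> complex) set" where
  "ED_fiber X u = {x. (x, u) \<in> ED_corr X}"

definition Sigma_inf :: "(complex \<times> complex) set \<Rightarrow> (complex \<times> complex) set" where
  "Sigma_inf X = {u. zdim C2 (ED_fiber X u) \<ge> 1}"

definition irred_curve :: "(complex \<times> complex) set \<Rightarrow> bool" where
  "irred_curve X \<longleftrightarrow> zirred C2 X \<and> zdim C2 X = 1"

definition line_dir :: "complex \<times> complex \<Rightarrow> (complex \<times> complex) set \<Rightarrow> bool" where
  "line_dir d X \<longleftrightarrow> (\<exists>p. X = {(fst p + t * fst d, snd p + t * snd d) | t. True})"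

definition circle :: "complex \<times> complex \<Rightarrow> complex \<Rightarrow> (complex \<times> complex) set" where
  "circle c r = {x. (fst x - fst c)^2 + (snd x - snd c)^2 = r^2}"

end

theory Submission
  imports Defs "HOL-Computational_Algebra.Computational_Algebra" "HOL-Computational_Algebra.Field_as_Ring"
    "HOL-Complex_Analysis.Complex_Analysis"
begin

text \<open>An irreducible curve \<open>X\<close> is the zero set of an irreducible polynomial \<open>f\<close>. At a point \<open>x\<close> of
  the ED fiber over \<open>u\<close> the vector \<open>u - x\<close> is normal to \<open>X\<close>, i.e. the derivative of \<open>f\<close> along the
  rotation field about \<open>u\<close> vanishes at \<open>x\<close>. If the fiber is infinite, \<open>f\<close> therefore divides this
  derivative, and \<open>X\<close> is invariant under all complex rotations about \<open>u\<close>. These act transitively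
  on every circle \<open>(x\<^sub>1 - u\<^sub>1)\<^sup>2 + (x\<^sub>2 - u\<^sub>2)\<^sup>2 = r\<^sup>2\<close> with \<open>r \<noteq> 0\<close>, so \<open>X\<close> is such a circle or one of
  the two isotropic lines through \<open>u\<close>. Conversely, on an isotropic line the normal direction is
  the tangent direction, so every fiber over a point of the line is the whole line; on a circle
  all normal lines pass through the centre, and any other point lies on only finitely many of them.\<close>

section \<open>Bivariate polynomials\<close>

type_synonym bpoly = "complex poly poly"

text \<open>The outer variable of a \<open>bpoly\<close> is \<open>y\<close>; its coefficients are polynomials in \<open>x\<close>.\<close>

definition poly2 :: "bpoly \<Rightarrow> complex \<times> complex \<Rightarrow> complex" where
  "poly2 P z = poly (poly P [:snd z:]) (fst z)"

definition pderiv_x :: "bpoly \<Rightarrow> bpoly" where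
  "pderiv_x P = map_poly pderiv P"

definition var_x :: bpoly where
  "var_x = [:[:0, 1:]:]"

definition var_y :: bpoly where
  "var_y = [:0, 1:]"

lemma poly2_add [simp]: "poly2 (P + Q) z = poly2 P z + poly2 Q z"
  and poly2_mult [simp]: "poly2 (P * Q) z = poly2 P z * poly2 Q z"
  and poly2_diff [simp]: "poly2 (P - Q) z = poly2 P z - poly2 Q z"
  and poly2_0 [simp]: "poly2 0 z = 0"
  and poly2_1 [simp]: "poly2 1 z = 1"
  and poly2_const [simp]: "poly2 [:[:c:]:] z = c"
  and poly2_var_x [simp]: "poly2 var_x z = fst z"
  and poly2_var_y [simp]: "poly2 var_y z = snd z"
  and poly2_smult [simp]: "poly2 (smult p P) z = poly p (fst z) * poly2 P z"
  by (simp_all add: poly2_def var_x_def var_y_def)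

lemma poly2_pCons: "poly2 (pCons p P) z = poly p (fst z) + snd z * poly2 P z"
  by (simp add: poly2_def)

lemma poly2_Pair: "poly2 P (a, b) = poly (map_poly (\<lambda>p. poly p a) P) b"
  by (induct P) (auto simp: poly2_pCons map_poly_pCons)

lemma poly2_unit_nonzero: "is_unit P \<Longrightarrow> poly2 P z \<noteq> 0"
  by (metis dvdE mult_zero_left one_neq_zero poly2_1 poly2_mult)

lemma polyfun_poly2: "polyfun C2 (poly2 P)"
proof (induct P)
  case 0
  then show ?case
    using pf_const[of C2 0] by (simp add: poly2_def[abs_def])
next
  case (pCons p P)
  have "polyfun C2 (\<lambda>z. poly p (fst z))"
  proof (induct p)
    case (pCons a p)
    have "polyfun C2 (\<lambda>z. a + fst z * poly p (fst z))"
      by (intro pf_add pf_mult pf_const pf_coord pCons) (simp add: C2_def)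
    then show ?case by simp
  qed (simp add: pf_const)
  moreover have "polyfun C2 snd"
    by (rule pf_coord) (simp add: C2_def)
  ultimately have "polyfun C2 (\<lambda>z. poly p (fst z) + snd z * poly2 P z)"
    using pCons(2) by (intro pf_add pf_mult)
  then show ?case
    by (simp add: poly2_pCons[abs_def])
qed

lemma polyfun_C2_imp_poly2: "polyfun C2 f \<Longrightarrow> \<exists>P. f = poly2 P"
proof (induct rule: polyfun.induct)
  case (pf_const c)
  show ?case by (intro exI[of _ "[:[:c:]:]"]) auto
next
  case (pf_coord f)
  then have "f = poly2 var_x \<or> f = poly2 var_y"
    by (auto simp: C2_def fun_eq_iff)
  then show ?case by blast
next
  case (pf_add f g)
  then obtain P Q where "f = poly2 P" "g = poly2 Q" by blast
  then show ?case by (intro exI[of _ "P + Q"]) (auto simp: fun_eq_iff)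
next
  case (pf_mult f g)
  then obtain P Q where "f = poly2 P" "g = poly2 Q" by blast
  then show ?case by (intro exI[of _ "P * Q"]) (auto simp: fun_eq_iff)
qed

lemma has_derivative_poly2:
  "(poly2 P has_derivative (\<lambda>h. poly2 (pderiv_x P) z * fst h + poly2 (pderiv P) z * snd h)) (at z)"
proof (induct P arbitrary: z)
  case 0
  then show ?case by (simp add: pderiv_x_def poly2_def[abs_def])
next
  case (pCons p P)
  have "(poly p has_derivative (\<lambda>h. poly (pderiv p) (fst z) * h)) (at (fst z))"
    using poly_DERIV[of p "fst z"] by (simp add: has_field_derivative_def)
  from has_derivative_compose[OF has_derivative_fst[OF has_derivative_ident] this]
  have "((\<lambda>z. poly p (fst z)) has_derivative (\<lambda>h. poly (pderiv p) (fst z) * fst h)) (at z)"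
    by simp
  then have "((\<lambda>z. poly p (fst z) + snd z * poly2 P z) has_derivative
      (\<lambda>h. poly (pderiv p) (fst z) * fst h
        + (snd z * (poly2 (pderiv_x P) z * fst h + poly2 (pderiv P) z * snd h) + snd h * poly2 P z)))
      (at z)"
    by (intro has_derivative_add has_derivative_mult pCons(2) has_derivative_snd[OF has_derivative_ident])
  then show ?case
    unfolding poly2_pCons[abs_def]
    by (rule has_derivative_eq_rhs)
      (auto simp: fun_eq_iff pderiv_x_def map_poly_pCons pderiv_pCons poly2_pCons algebra_simps)
qed

lemma DERIV_poly2_comp:
  assumes "(g1 has_field_derivative d1) (at t)" "(g2 has_field_derivative d2) (at t)"
  shows "((\<lambda>t. poly2 P (g1 t, g2 t)) has_field_derivative
           poly2 (pderiv_x P) (g1 t, g2 t) * d1 + poly2 (pderiv P) (g1 t, g2 t) * d2) (at t)"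
proof -
  have "((\<lambda>t. (g1 t, g2 t)) has_derivative (\<lambda>h. (d1 * h, d2 * h))) (at t)"
    using has_derivative_Pair[OF assms[unfolded has_field_derivative_def]]
    by (simp add: mult.commute)
  from has_derivative_compose[OF this has_derivative_poly2]
  show ?thesis
    unfolding has_field_derivative_def
    by (rule has_derivative_eq_rhs) (auto simp: fun_eq_iff algebra_simps)
qed

lemma grad_poly2: "grad (poly2 P) z = (poly2 (pderiv_x P) z, poly2 (pderiv P) z)"
proof -
  have "((\<lambda>t. poly2 P (t, snd z)) has_field_derivative poly2 (pderiv_x P) z) (at (fst z))"
    using DERIV_poly2_comp[of "\<lambda>t. t" 1 "fst z" "\<lambda>t. snd z" 0 P] by simp
  moreover have "((\<lambda>t. poly2 P (fst z, t)) has_field_derivative poly2 (pderiv P) z) (at (snd z))"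
    using DERIV_poly2_comp[of "\<lambda>t. fst z" 0 "snd z" "\<lambda>t. t" 1 P] by simp
  ultimately show ?thesis
    unfolding grad_def by (simp add: DERIV_imp_deriv)
qed

section \<open>Common zeros of coprime bivariate polynomials\<close>

text \<open>Making the fraction field of \<open>complex poly\<close> an instance of \<open>field_gcd\<close> (as \<open>Field_as_Ring\<close>
  does for \<open>complex\<close>) makes polynomials over it a Euclidean ring, so that Bezout's identity is available.\<close>

instantiation fract :: (idom)
  "{unique_euclidean_ring, normalization_euclidean_semiring, normalization_semidom_multiplicative}"
begin
definition [simp]: "normalize_fract = (normalize_field :: 'a fract \<Rightarrow> _)"
definition [simp]: "unit_factor_fract = (unit_factor_field :: 'a fract \<Rightarrow> _)"
definition [simp]: "modulo_fract = (mod_field :: 'a fract \<Rightarrow> _)"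
definition [simp]: "euclidean_size_fract = (euclidean_size_field :: 'a fract \<Rightarrow> _)"
definition [simp]: "division_segment (x :: 'a fract) = 1"
instance
  by standard (simp_all add: dvd_field_iff field_split_simps split: if_splits)
end

instantiation fract :: (idom) euclidean_ring_gcd
begin
definition gcd_fract :: "'a fract \<Rightarrow> 'a fract \<Rightarrow> 'a fract" where
  "gcd_fract = Euclidean_Algorithm.gcd"
definition lcm_fract :: "'a fract \<Rightarrow> 'a fract \<Rightarrow> 'a fract" where
  "lcm_fract = Euclidean_Algorithm.lcm"
definition Gcd_fract :: "'a fract set \<Rightarrow> 'a fract" where
  "Gcd_fract = Euclidean_Algorithm.Gcd"
definition Lcm_fract :: "'a fract set \<Rightarrow> 'a fract" where
  "Lcm_fract = Euclidean_Algorithm.Lcm"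
instance
  by standard (simp_all add: gcd_fract_def lcm_fract_def Gcd_fract_def Lcm_fract_def)
end

instance fract :: (idom) field_gcd ..

lemma fract_poly_clear_denominator:
  fixes A :: "'a::{factorial_ring_gcd, semiring_gcd_mult_normalize} fract poly"
  shows "\<exists>A' d. d \<noteq> 0 \<and> smult (to_fract d) A = fract_poly A'"
proof -
  define a where "a = fst (quot_of_fract (fract_content A))"
  define b where "b = snd (quot_of_fract (fract_content A))"
  have b: "b \<noteq> 0"
    by (simp add: b_def)
  have content: "fract_content A = to_fract a / to_fract b"
    unfolding a_def b_def by (metis Fract_conv_to_fract Fract_quot_of_fract)
  have "smult (to_fract b) A = smult (to_fract b) (smult (fract_content A) (fract_poly (primitive_part_fract A)))"
    by (simp add: content_times_primitive_part_fract)
  also have "\<dots> = fract_poly (smult a (primitive_part_fract A))"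
    using b by (simp add: content)
  finally show ?thesis
    using b by blast
qed

lemma vertical_line_dvd:
  assumes "\<And>b. poly2 Q (a, b) = 0"
  shows "[:[:-a, 1:]:] dvd Q"
proof -
  have "map_poly (\<lambda>p. poly p a) Q = 0"
    using assms poly_all_0_iff_0 unfolding poly2_Pair by blast
  then have "poly (coeff Q n) a = 0" for n
    by (metis coeff_0 coeff_map_poly poly_0)
  then show ?thesis
    by (simp add: const_poly_dvd_iff poly_eq_0_iff_dvd)
qed

lemma finite_zeros_above_roots:
  assumes "d \<noteq> 0" "\<And>a. poly d a = 0 \<Longrightarrow> map_poly (\<lambda>p. poly p a) G \<noteq> 0"
    and "S \<subseteq> {z. poly d (fst z) = 0 \<and> poly2 G z = 0}"
  shows "finite S"
proof -
  let ?T = "\<Union>a\<in>{a. poly d a = 0}. (\<lambda>b. (a, b)) ` {b. poly (map_poly (\<lambda>p. poly p a) G) b = 0}"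
  have "S \<subseteq> ?T"
    using assms(3) by (force simp: poly2_Pair)
  moreover have "finite ?T"
    using assms(1,2) by (intro finite_UN_I finite_imageI) (auto simp: poly_roots_finite)
  ultimately show ?thesis
    using finite_subset by blast
qed

lemma bezout_const_bpoly:
  fixes f Q :: bpoly
  assumes "degree f \<noteq> 0" "irreducible f" "\<not> f dvd Q"
  shows "\<exists>A B d. d \<noteq> 0 \<and> A * f + B * Q = [:d:]"
proof -
  have "irreducible (fract_poly f)" and content: "content f = 1"
    using nonconst_poly_irreducible_iff[OF assms(1)] assms(2) by auto
  then have "prime_elem (fract_poly f)"
    by (simp add: field_poly_irreducible_imp_prime)
  moreover have "\<not> fract_poly f dvd fract_poly Q"
    using fract_poly_dvdD[OF _ content] assms(3) by blast
  ultimately obtain A B where AB: "A * fract_poly f + B * fract_poly Q = 1"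
    by (metis prime_elem_imp_coprime bezout_coefficients_fst_snd coprime_imp_gcd_eq_1)
  obtain A' dA where A': "dA \<noteq> 0" "smult (to_fract dA) A = fract_poly A'"
    using fract_poly_clear_denominator by blast
  obtain B' dB where B': "dB \<noteq> 0" "smult (to_fract dB) B = fract_poly B'"
    using fract_poly_clear_denominator by blast
  have "fract_poly (smult dB A' * f + smult dA B' * Q)
      = smult (to_fract dA * to_fract dB) (A * fract_poly f + B * fract_poly Q)"
    by (simp add: A'(2)[symmetric] B'(2)[symmetric] algebra_simps smult_add_right)
  also have "\<dots> = fract_poly [:dA * dB:]"
    using AB by (simp add: map_poly_pCons one_pCons)
  finally have "smult dB A' * f + smult dA B' * Q = [:dA * dB:]"
    by (simp only: fract_poly_eq_iff)
  moreover have "dA * dB \<noteq> 0"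
    using A'(1) B'(1) by simp
  ultimately show ?thesis
    by blast
qed

lemma finite_common_zeros_const_y:
  fixes c :: "complex poly" and Q :: bpoly
  assumes c: "irreducible c" and ndvd: "\<not> [:c:] dvd Q"
  shows "finite {z. poly2 [:c:] z = 0 \<and> poly2 Q z = 0}"
proof (rule finite_zeros_above_roots)
  show "c \<noteq> 0"
    using c by auto
next
  fix a assume "poly c a = 0"
  then obtain k where k: "c = [:-a, 1:] * k"
    by (auto simp: poly_eq_0_iff_dvd)
  have "\<not> is_unit [:-a, 1::complex:]"
    by (simp add: is_unit_poly_iff)
  with irreducibleD[OF c k] have "is_unit [:k:]"
    by (simp add: is_unit_const_poly_iff)
  moreover have "[:c:] = [:[:-a, 1:]:] * [:k:]"
    using k by simp
  ultimately have "[:c:] dvd [:[:-a, 1:]:]"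
    by (metis dvd_refl mult_unit_dvd_iff)
  show "map_poly (\<lambda>p. poly p a) Q \<noteq> 0"
  proof
    assume "map_poly (\<lambda>p. poly p a) Q = 0"
    then have "[:[:-a, 1:]:] dvd Q"
      by (intro vertical_line_dvd) (simp add: poly2_Pair)
    then show False
      using ndvd \<open>[:c:] dvd [:[:-a, 1:]:]\<close> dvd_trans by blast
  qed
next
  show "{z. poly2 [:c:] z = 0 \<and> poly2 Q z = 0} \<subseteq> {z. poly c (fst z) = 0 \<and> poly2 Q z = 0}"
    by (auto simp: poly2_def)
qed

text \<open>For nonconstant \<open>f\<close>, a combination \<open>A f + B Q = d(x) \<noteq> 0\<close> eliminates \<open>y\<close>: common zeros lie over
  the roots of \<open>d\<close>, and above each of them \<open>f\<close> has only finitely many zeros since its content is 1.\<close>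

lemma finite_common_zeros:
  fixes f Q :: bpoly
  assumes irr: "irreducible f" and ndvd: "\<not> f dvd Q"
  shows "finite {z. poly2 f z = 0 \<and> poly2 Q z = 0}"
proof (cases "degree f = 0")
  case True
  then obtain c where "f = [:c:]"
    by (metis degree_eq_zeroE)
  then show ?thesis
    using finite_common_zeros_const_y irr ndvd by (simp add: irreducible_const_poly_iff)
next
  case False
  obtain A B d where ABd: "d \<noteq> 0" "A * f + B * Q = [:d:]"
    using bezout_const_bpoly[OF False irr ndvd] by blast
  show ?thesis
  proof (rule finite_zeros_above_roots[of d f])
    fix a assume "poly d a = 0"
    show "map_poly (\<lambda>p. poly p a) f \<noteq> 0"
    proof
      assume "map_poly (\<lambda>p. poly p a) f = 0"
      then have "[:-a, 1:] dvd content f"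
        using vertical_line_dvd[of f a] by (simp add: poly2_Pair const_poly_dvd_iff_dvd_content)
      moreover have "content f = 1"
        using False irr nonconst_poly_irreducible_iff[of f] by simp
      ultimately show False
        by (simp add: is_unit_poly_iff)
    qed
  next
    have "poly d (fst z) = poly2 A z * poly2 f z + poly2 B z * poly2 Q z" for z
      using arg_cong[OF ABd(2), of "\<lambda>P. poly2 P z"] by (simp add: poly2_def)
    then show "{z. poly2 f z = 0 \<and> poly2 Q z = 0} \<subseteq> {z. poly d (fst z) = 0 \<and> poly2 f z = 0}"
      by auto
  qed (fact ABd(1))
qed

section \<open>Zariski closed and irreducible subsets of the plane\<close>

lemma polyfun_diff:
  assumes "polyfun C f" "polyfun C g"
  shows "polyfun C (\<lambda>x. f x - g x)"
proof -
  have "polyfun C (\<lambda>x. f x + (-1) * g x)"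
    using assms by (intro pf_add pf_mult pf_const)
  then show ?thesis
    by simp
qed

lemma polyfun_power2: "polyfun C f \<Longrightarrow> polyfun C (\<lambda>x. (f x)^2)"
  using pf_mult[of C f f] by (simp add: power2_eq_square)

lemma polyfun_fst: "polyfun C2 fst"
  and polyfun_snd: "polyfun C2 snd"
  by (auto intro: pf_coord simp: C2_def)

lemma zclosed_iff_vanishing: "zclosed C S \<longleftrightarrow> S = {x. \<forall>f\<in>vanishing C S. f x = 0}"
proof
  assume "zclosed C S"
  then obtain F where F: "\<forall>f\<in>F. polyfun C f" "S = {x. \<forall>f\<in>F. f x = 0}"
    by (auto simp: zclosed_def)
  then have "F \<subseteq> vanishing C S"
    by (auto simp: vanishing_def)
  with F(2) show "S = {x. \<forall>f\<in>vanishing C S. f x = 0}"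
    by (auto simp: vanishing_def)
next
  assume "S = {x. \<forall>f\<in>vanishing C S. f x = 0}"
  then show "zclosed C S"
    unfolding zclosed_def by (intro exI[of _ "vanishing C S"]) (auto simp: vanishing_def)
qed

lemma zclosed_Inter: "(\<And>T. T \<in> TT \<Longrightarrow> zclosed C T) \<Longrightarrow> zclosed C (\<Inter>TT)"
  unfolding zclosed_iff_vanishing[of C "\<Inter>TT"]
proof safe
  fix x T assume closed: "\<And>T. T \<in> TT \<Longrightarrow> zclosed C T"
    and x: "\<forall>f\<in>vanishing C (\<Inter>TT). f x = 0" and T: "T \<in> TT"
  have "vanishing C T \<subseteq> vanishing C (\<Inter>TT)"
    using T by (auto simp: vanishing_def)
  then show "x \<in> T"
    using closed[OF T] x unfolding zclosed_iff_vanishing by blast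
qed (auto simp: vanishing_def)

lemma zclosed_Int: "zclosed C A \<Longrightarrow> zclosed C B \<Longrightarrow> zclosed C (A \<inter> B)"
  using zclosed_Inter[of "{A, B}" C] by auto

lemma zclosed_Un:
  assumes "zclosed C A" "zclosed C B"
  shows "zclosed C (A \<union> B)"
proof -
  obtain F where F: "\<forall>f\<in>F. polyfun C f" "A = {x. \<forall>f\<in>F. f x = 0}"
    using assms(1) by (auto simp: zclosed_def)
  obtain G where G: "\<forall>g\<in>G. polyfun C g" "B = {x. \<forall>g\<in>G. g x = 0}"
    using assms(2) by (auto simp: zclosed_def)
  define H where "H = {h. \<exists>f\<in>F. \<exists>g\<in>G. h = (\<lambda>x. f x * g x)}"
  have "\<forall>h\<in>H. polyfun C h"
    using F G by (auto simp: H_def intro: pf_mult)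
  moreover have "A \<union> B = {x. \<forall>h\<in>H. h x = 0}"
  proof safe
    fix x assume x: "\<forall>h\<in>H. h x = 0" "x \<notin> B"
    then obtain g where g: "g \<in> G" "g x \<noteq> 0"
      using G(2) by auto
    have "f x = 0" if "f \<in> F" for f
    proof -
      have "(\<lambda>x. f x * g x) \<in> H"
        using g(1) that by (auto simp: H_def)
      then show ?thesis
        using x(1) g(2) by fastforce
    qed
    then show "x \<in> A"
      using F(2) by blast
  qed (auto simp: H_def F(2) G(2))
  ultimately show ?thesis
    unfolding zclosed_def by blast
qed

lemma zclosed_empty: "zclosed C {}"
  unfolding zclosed_def by (intro exI[of _ "{\<lambda>_. 1}"]) (auto intro: pf_const)

lemma zclosed_zeros: "polyfun C f \<Longrightarrow> zclosed C {x. f x = 0}"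
  unfolding zclosed_def by (intro exI[of _ "{f}"]) auto

lemma zclosed_singleton: "zclosed C2 {p}"
proof -
  have "{p} = {z. fst z - fst p = 0} \<inter> {z. snd z - snd p = 0}"
    by (auto simp: prod_eq_iff)
  moreover have "zclosed C2 {z. fst z - fst p = 0}" "zclosed C2 {z. snd z - snd p = 0}"
    by (intro zclosed_zeros polyfun_diff polyfun_fst polyfun_snd pf_const)+
  ultimately show ?thesis
    by (simp add: zclosed_Int)
qed

lemma zclosed_finite: "finite S \<Longrightarrow> zclosed C2 S"
proof (induct rule: finite_induct)
  case (insert x F)
  then show ?case
    using zclosed_Un[OF zclosed_singleton, of F x] by simp
qed (rule zclosed_empty)

lemma zcl_eq: "zclosed C S \<Longrightarrow> zcl C S = S"
  and zcl_superset: "S \<subseteq> zcl C S"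
  and zcl_least: "zclosed C T \<Longrightarrow> S \<subseteq> T \<Longrightarrow> zcl C S \<subseteq> T"
  unfolding zcl_def by auto

lemma zirred_singleton: "zirred C2 {p}"
  unfolding zirred_def using zclosed_singleton by auto

lemma zirred_finite_imp_singleton:
  assumes "zirred C2 X" "finite X"
  shows "\<exists>p. X = {p}"
proof -
  obtain p where p: "p \<in> X"
    using assms(1) by (auto simp: zirred_def)
  have "zclosed C2 {p}" "zclosed C2 (X - {p})" "X \<subseteq> {p} \<union> (X - {p})"
    using assms(2) by (auto intro: zclosed_singleton zclosed_finite)
  then have "X \<subseteq> {p} \<or> X \<subseteq> X - {p}"
    using assms(1) unfolding zirred_def by blast
  then show ?thesis
    using p by blast
qed

lemma zirred_infinite_if_psubset:
  assumes "zirred C2 Y" "Z \<subset> Y" "Z \<noteq> {}"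
  shows "infinite Y"
  using zirred_finite_imp_singleton[OF assms(1)] assms(2,3) by auto

definition zero_set :: "bpoly \<Rightarrow> (complex \<times> complex) set" where
  "zero_set P = {z. poly2 P z = 0}"

lemma zclosed_zero_set: "zclosed C2 (zero_set P)"
  unfolding zero_set_def by (rule zclosed_zeros[OF polyfun_poly2])

lemma zero_set_mult: "zero_set (P * Q) = zero_set P \<union> zero_set Q"
  by (auto simp: zero_set_def)

lemma zirred_subset_zero_set_prod_mset:
  assumes "zirred C2 X" "X \<subseteq> zero_set (prod_mset M)"
  shows "\<exists>P\<in>#M. X \<subseteq> zero_set P"
  using assms(2)
proof (induct M)
  case empty
  then show ?case
    using assms(1) by (auto simp: zero_set_def zirred_def)
next
  case (add P M)
  then have "X \<subseteq> zero_set P \<or> X \<subseteq> zero_set (prod_mset M)"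
    using assms(1) zclosed_zero_set unfolding zirred_def by (simp add: zero_set_mult)
  then show ?case
    using add(1) by auto
qed

lemma zero_set_normalize: "zero_set (normalize P) = zero_set P"
proof (cases "P = 0")
  case False
  have "poly2 P z = poly2 (unit_factor P) z * poly2 (normalize P) z" for z
    by (metis poly2_mult unit_factor_mult_normalize)
  moreover have "poly2 (unit_factor P) z \<noteq> 0" for z
    using False by (intro poly2_unit_nonzero) simp
  ultimately show ?thesis
    by (auto simp: zero_set_def)
qed simp

lemma irreducible_dvd_if_infinite_common_zeros:
  assumes "irreducible f" "infinite S" "S \<subseteq> zero_set f \<inter> zero_set Q"
  shows "f dvd Q"
proof (rule ccontr)
  assume "\<not> f dvd Q"
  then have "finite (zero_set f \<inter> zero_set Q)"
    using finite_common_zeros[OF assms(1)] by (simp add: zero_set_def Collect_conj_eq)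
  then show False
    using assms(2,3) finite_subset by blast
qed

lemma zirred_subset_zero_set_irreducible:
  assumes "zirred C2 X" "P \<noteq> 0" "X \<subseteq> zero_set P"
  shows "\<exists>p. irreducible p \<and> X \<subseteq> zero_set p"
proof -
  have "zero_set (prod_mset (prime_factorization P)) = zero_set P"
    using assms(2) by (metis prod_mset_prime_factorization_weak zero_set_normalize)
  then have "X \<subseteq> zero_set (prod_mset (prime_factorization P))"
    using assms(3) by simp
  then obtain p where p: "p \<in># prime_factorization P" "X \<subseteq> zero_set p"
    using zirred_subset_zero_set_prod_mset[OF assms(1)] by blast
  then have "irreducible p"
    by (auto dest!: in_prime_factors_imp_prime intro: prime_elem_imp_irreducible)
  then show ?thesis
    using p(2) by blast
qed

text \<open>Some irreducible factor \<open>p\<close> of a polynomial vanishing on \<open>X\<close> vanishes on \<open>X\<close>; every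
  polynomial vanishing on \<open>X\<close> has infinitely many zeros in common with \<open>p\<close>, hence is a multiple of \<open>p\<close>.\<close>

lemma zirred_eq_zero_set_irreducible:
  assumes irr: "zirred C2 X" and "X \<noteq> UNIV" and inf: "infinite X"
  shows "\<exists>f. irreducible f \<and> X = zero_set f"
proof -
  obtain F where F: "\<forall>f\<in>F. polyfun C2 f" "X = {x. \<forall>f\<in>F. f x = 0}"
    using irr by (auto simp: zirred_def zclosed_def)
  obtain g z0 where g: "g \<in> F" "g z0 \<noteq> 0"
    using F(2) assms(2) by auto
  then obtain P where "g = poly2 P" "P \<noteq> 0"
    using F(1) polyfun_C2_imp_poly2 by fastforce
  moreover have "X \<subseteq> zero_set P"
    using F(2) g(1) \<open>g = poly2 P\<close> by (auto simp: zero_set_def)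
  ultimately obtain p where p: "irreducible p" "X \<subseteq> zero_set p"
    using zirred_subset_zero_set_irreducible[OF irr] by blast
  have "z \<in> X" if z: "z \<in> zero_set p" for z
  proof (rule ccontr)
    assume "z \<notin> X"
    then obtain Q where Q: "poly2 Q \<in> F" "poly2 Q z \<noteq> 0"
      using F polyfun_C2_imp_poly2 by blast
    have "X \<subseteq> zero_set p \<inter> zero_set Q"
      using p(2) F(2) Q(1) by (auto simp: zero_set_def)
    then have "p dvd Q"
      by (rule irreducible_dvd_if_infinite_common_zeros[OF p(1) inf])
    then show False
      using z Q(2) by (auto simp: zero_set_def elim!: dvdE)
  qed
  then show ?thesis
    using p by blast
qed

lemma zero_set_irreducible_mono_eq:
  assumes "irreducible f" "irreducible g" "infinite (zero_set f)" "zero_set f \<subseteq> zero_set g"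
  shows "zero_set f = zero_set g"
proof -
  have "g dvd f"
    using irreducible_dvd_if_infinite_common_zeros[OF assms(2,3)] assms(4) by blast
  then obtain k where k: "f = g * k"
    by blast
  then have "is_unit k"
    using irreducibleD[OF assms(1)] irreducible_not_unit[OF assms(2)] by blast
  then show ?thesis
    using k poly2_unit_nonzero[of k] by (auto simp: zero_set_def)
qed

text \<open>In a chain \<open>Z\<^sub>0 \<subset> Z\<^sub>1 \<subset> Z\<^sub>2 \<subset> Z\<^sub>3\<close>, the sets \<open>Z\<^sub>1 \<subset> Z\<^sub>2\<close> would be nested zero sets of
  irreducible polynomials with infinitely many points, which must coincide.\<close>

lemma zirred_chain_length_le_2:
  assumes "\<forall>i\<le>n. zirred C2 (Z i)" "\<forall>i<n. Z i \<subset> Z (Suc i)"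
  shows "n \<le> 2"
proof (rule ccontr)
  assume "\<not> n \<le> 2"
  then have "3 \<le> n"
    by simp
  then have irr: "zirred C2 (Z 1)" "zirred C2 (Z 2)"
    and sub: "Z 0 \<subset> Z 1" "Z 1 \<subset> Z 2" "Z 2 \<subset> Z 3"
    using assms(1) assms(2)[rule_format, of 0] assms(2)[rule_format, of 1] assms(2)[rule_format, of 2]
    by (simp_all add: numeral_2_eq_2 numeral_3_eq_3)
  have "Z 0 \<noteq> {}"
    using assms(1) by (auto simp: zirred_def)
  then have inf: "infinite (Z 1)" "infinite (Z 2)"
    using zirred_infinite_if_psubset[OF irr(1) sub(1)] sub(2) finite_subset by auto
  obtain f where f: "irreducible f" "Z 1 = zero_set f"
    using zirred_eq_zero_set_irreducible[OF irr(1) _ inf(1)] sub by blast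
  obtain g where g: "irreducible g" "Z 2 = zero_set g"
    using zirred_eq_zero_set_irreducible[OF irr(2) _ inf(2)] sub by blast
  show False
    using zero_set_irreducible_mono_eq[OF f(1) g(1)] f(2) g(2) inf sub(2) by auto
qed

section \<open>Dimension\<close>

definition zchain_lengths :: "(complex \<times> complex) set \<Rightarrow> nat set" where
  "zchain_lengths S = {n. \<exists>Z::nat \<Rightarrow> (complex \<times> complex) set.
      (\<forall>i\<le>n. zirred C2 (Z i)) \<and> (\<forall>i<n. Z i \<subset> Z (Suc i)) \<and> Z n \<subseteq> zcl C2 S}"

lemma zdim_eq_Sup_zchain_lengths: "S \<noteq> {} \<Longrightarrow> zdim C2 S = int (Sup (zchain_lengths S))"
  unfolding zdim_def zchain_lengths_def by simp

lemma zdim_empty: "zdim C2 {} = -1"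
  unfolding zdim_def by simp

lemma finite_zchain_lengths: "finite (zchain_lengths S)"
proof -
  have "zchain_lengths S \<subseteq> {..2}"
    using zirred_chain_length_le_2 by (auto simp: zchain_lengths_def)
  then show ?thesis
    using finite_subset by blast
qed

lemma zchain_lengths_0:
  assumes "p \<in> S"
  shows "0 \<in> zchain_lengths S"
  unfolding zchain_lengths_def using assms zcl_superset[of S C2]
  by (intro CollectI exI[of _ "\<lambda>_. {p}"]) (auto simp: zirred_singleton)

lemma zchain_mono:
  assumes "\<forall>i<n. Z i \<subset> Z (Suc i)" "i \<le> j" "j \<le> n"
  shows "Z i \<subseteq> Z j"
  using assms(2,3)
proof (induct j)
  case (Suc j)
  show ?case
  proof (cases "i = Suc j")
    case False
    then have "Z i \<subseteq> Z j"
      using Suc by simp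
    moreover have "Z j \<subset> Z (Suc j)"
      using assms(1) Suc(3) by simp
    ultimately show ?thesis
      by blast
  qed simp
qed simp

lemma zchain_lengths_downward_closed:
  assumes "n \<in> zchain_lengths S" "m \<le> n"
  shows "m \<in> zchain_lengths S"
proof -
  obtain Z where Z: "\<forall>i\<le>n. zirred C2 (Z i)" "\<forall>i<n. Z i \<subset> Z (Suc i)" "Z n \<subseteq> zcl C2 S"
    using assms(1) unfolding zchain_lengths_def by blast
  then have "Z m \<subseteq> zcl C2 S"
    using zchain_mono[OF Z(2) assms(2)] by simp
  then show ?thesis
    unfolding zchain_lengths_def using Z assms(2) by (intro CollectI exI[of _ Z]) auto
qed

lemma zdim_ge_iff:
  assumes "S \<noteq> {}"
  shows "int n \<le> zdim C2 S \<longleftrightarrow> n \<in> zchain_lengths S"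
proof -
  have ne: "zchain_lengths S \<noteq> {}"
    using zchain_lengths_0 assms by blast
  have "Sup (zchain_lengths S) \<in> zchain_lengths S"
    using ne finite_zchain_lengths by (simp add: Sup_nat_def)
  moreover have "n \<le> Sup (zchain_lengths S)" if "n \<in> zchain_lengths S"
    using ne finite_zchain_lengths that by (simp add: Sup_nat_def)
  ultimately show ?thesis
    using zchain_lengths_downward_closed[of "Sup (zchain_lengths S)" S n]
    unfolding zdim_eq_Sup_zchain_lengths[OF assms] by auto
qed

lemma infinite_zcl_if_zdim_ge_1:
  assumes "zdim C2 S \<ge> 1"
  shows "infinite (zcl C2 S)"
proof -
  have "S \<noteq> {}"
    using assms by (auto simp: zdim_empty)
  then have "1 \<in> zchain_lengths S"
    using assms zdim_ge_iff[of S 1] by simp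
  then obtain Z where Z: "\<forall>i\<le>1. zirred C2 (Z i)" "\<forall>i<1. Z i \<subset> Z (Suc i)" "Z 1 \<subseteq> zcl C2 S"
    unfolding zchain_lengths_def by blast
  have "Z 0 \<noteq> {}"
    using Z(1) by (auto simp: zirred_def)
  then have "infinite (Z 1)"
    using zirred_infinite_if_psubset[of "Z 1" "Z 0"] Z(1,2) by simp
  then show ?thesis
    using Z(3) finite_subset by blast
qed

lemma zdim_finite:
  assumes "finite S" "S \<noteq> {}"
  shows "zdim C2 S = 0"
proof -
  have "\<not> zdim C2 S \<ge> 1"
    using infinite_zcl_if_zdim_ge_1[of S] zcl_eq[OF zclosed_finite[OF assms(1)]] assms(1) by auto
  moreover have "zdim C2 S \<ge> 0"
    using zdim_ge_iff[OF assms(2), of 0] zchain_lengths_0 assms(2) by auto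
  ultimately show ?thesis
    by simp
qed

lemma zdim_lt_1_if_finite: "finite S \<Longrightarrow> zdim C2 S < 1"
  by (cases "S = {}") (auto simp: zdim_empty zdim_finite)

text \<open>A chain \<open>{p} \<subset> Y \<subset> X\<close> of irreducible closed sets would give \<open>X\<close> dimension at least 2.\<close>

lemma zdim_1_maximal:
  assumes "zdim C2 X = 1" "zirred C2 X" "zirred C2 Y" "infinite Y" "Y \<subseteq> X"
  shows "Y = X"
proof (rule ccontr)
  assume ne: "Y \<noteq> X"
  obtain p where p: "p \<in> Y"
    using assms(4) by (metis finite.emptyI ex_in_conv)
  define Z where "Z = (\<lambda>i::nat. if i = 0 then {p} else if i = 1 then Y else X)"
  have "2 \<in> zchain_lengths X"
    unfolding zchain_lengths_def
  proof (intro CollectI exI[of _ Z] conjI allI impI)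
    fix i :: nat assume "i \<le> 2"
    then show "zirred C2 (Z i)"
      using assms zirred_singleton by (auto simp: Z_def)
  next
    fix i :: nat assume "i < 2"
    then have "i = 0 \<or> i = 1"
      by auto
    then show "Z i \<subset> Z (Suc i)"
      using p ne assms(4,5) by (auto simp: Z_def)
  qed (use zcl_superset[of X C2] in \<open>auto simp: Z_def\<close>)
  then show False
    using zdim_ge_iff[of X 2] assms(1,2) by (auto simp: zirred_def)
qed

section \<open>Lines and circles\<close>

definition polyfun_dichotomy :: "(complex \<times> complex) set \<Rightarrow> bool" where
  "polyfun_dichotomy Y \<longleftrightarrow>
     (\<forall>f. polyfun C2 f \<longrightarrow> Y \<subseteq> {z. f z = 0} \<or> finite (Y \<inter> {z. f z = 0}))"

lemma zirred_if_polyfun_dichotomy: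
  assumes closed: "zclosed C2 Y" and inf: "infinite Y" and dich: "polyfun_dichotomy Y"
  shows "zirred C2 Y"
  unfolding zirred_def
proof (intro conjI allI impI)
  show "zclosed C2 Y" "Y \<noteq> {}"
    using closed inf by auto
  have fin: "finite (Y \<inter> T)" if T: "zclosed C2 T" "\<not> Y \<subseteq> T" for T
  proof -
    obtain F where F: "\<forall>f\<in>F. polyfun C2 f" "T = {x. \<forall>f\<in>F. f x = 0}"
      using T(1) by (auto simp: zclosed_def)
    obtain y f where yf: "y \<in> Y" "f \<in> F" "f y \<noteq> 0"
      using T(2) F(2) by auto
    then have "finite (Y \<inter> {z. f z = 0})"
      using dich F(1) unfolding polyfun_dichotomy_def by blast
    moreover have "Y \<inter> T \<subseteq> Y \<inter> {z. f z = 0}"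
      using F(2) yf(2) by auto
    ultimately show ?thesis
      using finite_subset by blast
  qed
  fix A B assume AB: "zclosed C2 A \<and> zclosed C2 B \<and> Y \<subseteq> A \<union> B"
  show "Y \<subseteq> A \<or> Y \<subseteq> B"
  proof (rule ccontr)
    assume "\<not> (Y \<subseteq> A \<or> Y \<subseteq> B)"
    then have "finite ((Y \<inter> A) \<union> (Y \<inter> B))"
      using fin AB by auto
    moreover have "Y \<subseteq> (Y \<inter> A) \<union> (Y \<inter> B)"
      using AB by auto
    ultimately show False
      using inf finite_subset by blast
  qed
qed

lemma polyfun_dichotomy_subset_eq:
  assumes closed: "zclosed C2 X" and inf: "infinite X" and "X \<subseteq> Y" and dich: "polyfun_dichotomy Y"
  shows "X = Y"
proof (rule ccontr)
  assume "X \<noteq> Y"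
  then obtain y where y: "y \<in> Y" "y \<notin> X"
    using assms(3) by auto
  obtain F where F: "\<forall>f\<in>F. polyfun C2 f" "X = {x. \<forall>f\<in>F. f x = 0}"
    using closed by (auto simp: zclosed_def)
  obtain f where f: "f \<in> F" "f y \<noteq> 0"
    using y F(2) by auto
  have "finite (Y \<inter> {z. f z = 0})"
    using dich F(1) f y unfolding polyfun_dichotomy_def by blast
  moreover have "X \<subseteq> Y \<inter> {z. f z = 0}"
    using assms(3) F(2) f(1) by auto
  ultimately show False
    using inf finite_subset by blast
qed

lemma polyfun_dichotomy_image:
  assumes "\<And>f. polyfun C2 f \<Longrightarrow> \<exists>q N. \<forall>s\<in>A. f (\<gamma> s) = poly q s / s^N"
  shows "polyfun_dichotomy (\<gamma> ` A)"
  unfolding polyfun_dichotomy_def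
proof (intro allI impI)
  fix f assume "polyfun C2 f"
  then obtain q N where q: "\<forall>s\<in>A. f (\<gamma> s) = poly q s / s^N"
    using assms by blast
  show "\<gamma> ` A \<subseteq> {z. f z = 0} \<or> finite (\<gamma> ` A \<inter> {z. f z = 0})"
  proof (cases "q = 0")
    case False
    have "\<gamma> ` A \<inter> {z. f z = 0} \<subseteq> \<gamma> ` ({s. poly q s = 0} \<union> {0})"
      using q by auto
    moreover have "finite ({s. poly q s = 0} \<union> {0})"
      using False poly_roots_finite by auto
    ultimately show ?thesis
      using finite_subset by blast
  qed (use q in auto)
qed

lemma polyfun_comp_polynomial_curve:
  assumes "\<exists>q. \<forall>s. fst (\<gamma> s) = poly q s" "\<exists>q. \<forall>s. snd (\<gamma> s) = poly q s"
    and "polyfun C2 f"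
  shows "\<exists>q. \<forall>s. f (\<gamma> s) = poly q s"
  using assms(3)
proof (induct rule: polyfun.induct)
  case (pf_const c)
  show ?case by (intro exI[of _ "[:c:]"]) simp
next
  case (pf_coord f)
  then show ?case using assms(1,2) by (auto simp: C2_def)
next
  case (pf_add f g)
  then obtain q1 q2 where "\<forall>s. f (\<gamma> s) = poly q1 s" "\<forall>s. g (\<gamma> s) = poly q2 s"
    by blast
  then show ?case by (intro exI[of _ "q1 + q2"]) simp
next
  case (pf_mult f g)
  then obtain q1 q2 where "\<forall>s. f (\<gamma> s) = poly q1 s" "\<forall>s. g (\<gamma> s) = poly q2 s"
    by blast
  then show ?case by (intro exI[of _ "q1 * q2"]) simp
qed

lemma polyfun_comp_Laurent_curve:
  assumes "\<exists>q N. \<forall>s\<in>A. fst (\<gamma> s) = poly q s / s^N" "\<exists>q N. \<forall>s\<in>A. snd (\<gamma> s) = poly q s / s^N"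
    and "polyfun C2 f" and "0 \<notin> A"
  shows "\<exists>q N. \<forall>s\<in>A. f (\<gamma> s) = poly q s / s^N"
  using assms(3)
proof (induct rule: polyfun.induct)
  case (pf_const c)
  show ?case by (intro exI[of _ "[:c:]"] exI[of _ 0]) simp
next
  case (pf_coord f)
  then show ?case using assms(1,2) by (auto simp: C2_def)
next
  case (pf_add f g)
  then obtain q1 N1 q2 N2
    where q: "\<forall>s\<in>A. f (\<gamma> s) = poly q1 s / s^N1" "\<forall>s\<in>A. g (\<gamma> s) = poly q2 s / s^N2"
    by blast
  show ?case
  proof (intro exI[of _ "q1 * monom 1 N2 + q2 * monom 1 N1"] exI[of _ "N1 + N2"] ballI)
    fix s assume s: "s \<in> A"
    then have n1: "s^N1 \<noteq> 0" and n2: "s^N2 \<noteq> 0"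
      using assms(4) by auto
    have "f (\<gamma> s) + g (\<gamma> s) = poly q1 s / s^N1 + poly q2 s / s^N2"
      using q s by simp
    also have "\<dots> = (poly q1 s * s^N2 + poly q2 s * s^N1) / (s^N1 * s^N2)"
      by (rule add_frac_eq[OF n1 n2])
    finally show "f (\<gamma> s) + g (\<gamma> s) = poly (q1 * monom 1 N2 + q2 * monom 1 N1) s / s ^ (N1 + N2)"
      by (simp add: poly_monom power_add)
  qed
next
  case (pf_mult f g)
  then obtain q1 N1 q2 N2
    where "\<forall>s\<in>A. f (\<gamma> s) = poly q1 s / s^N1" "\<forall>s\<in>A. g (\<gamma> s) = poly q2 s / s^N2"
    by blast
  then show ?case
    by (intro exI[of _ "q1 * q2"] exI[of _ "N1 + N2"]) (simp add: power_add)
qed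

definition affine_line :: "complex \<times> complex \<Rightarrow> complex \<times> complex \<Rightarrow> (complex \<times> complex) set" where
  "affine_line p d = {(fst p + t * fst d, snd p + t * snd d) | t. True}"

lemma line_dir_iff: "line_dir d X \<longleftrightarrow> (\<exists>p. X = affine_line p d)"
  unfolding line_dir_def affine_line_def by simp

lemma affine_line_image: "affine_line p d = (\<lambda>t. (fst p + t * fst d, snd p + t * snd d)) ` UNIV"
  unfolding affine_line_def by auto

lemma polyfun_dichotomy_affine_line: "polyfun_dichotomy (affine_line p d)"
  unfolding affine_line_image
proof (rule polyfun_dichotomy_image)
  fix f :: "complex \<times> complex \<Rightarrow> complex"
  assume "polyfun C2 f"
  have "\<exists>q. \<forall>s. f (fst p + s * fst d, snd p + s * snd d) = poly q s"
  proof (rule polyfun_comp_polynomial_curve[where \<gamma>="\<lambda>s. (fst p + s * fst d, snd p + s * snd d)",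
        simplified, OF _ _ \<open>polyfun C2 f\<close>])
    show "\<exists>q. \<forall>s. fst p + s * fst d = poly q s"
      by (intro exI[of _ "[:fst p, fst d:]"] allI) (simp add: algebra_simps)
    show "\<exists>q. \<forall>s. snd p + s * snd d = poly q s"
      by (intro exI[of _ "[:snd p, snd d:]"] allI) (simp add: algebra_simps)
  qed
  then obtain q where "\<forall>s. f (fst p + s * fst d, snd p + s * snd d) = poly q s"
    by blast
  then show "\<exists>q N. \<forall>s\<in>UNIV. f (fst p + s * fst d, snd p + s * snd d) = poly q s / s^N"
    by (intro exI[of _ q] exI[of _ 0]) simp
qed

lemma infinite_affine_line: "d \<noteq> 0 \<Longrightarrow> infinite (affine_line p d)"
  unfolding affine_line_image
  using infinite_UNIV_char_0 by (auto dest!: finite_imageD simp: inj_on_def prod_eq_iff)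

lemma affine_line_eq_zeros:
  assumes "d \<noteq> 0"
  shows "affine_line p d = {z. snd d * (fst z - fst p) - fst d * (snd z - snd p) = 0}"
proof safe
  fix a b assume h: "snd d * (fst (a, b) - fst p) - fst d * (snd (a, b) - snd p) = 0"
  show "(a, b) \<in> affine_line p d"
  proof (cases "fst d = 0")
    case True
    then have "snd d \<noteq> 0"
      using assms by (auto simp: prod_eq_iff)
    then show ?thesis
      using h True unfolding affine_line_def
      by (intro CollectI exI[of _ "(b - snd p) / snd d"]) (auto simp: field_simps)
  next
    case False
    then show ?thesis
      using h unfolding affine_line_def
      by (intro CollectI exI[of _ "(a - fst p) / fst d"]) (auto simp: field_simps)
  qed
qed (auto simp: affine_line_def algebra_simps)

lemma zclosed_affine_line: "d \<noteq> 0 \<Longrightarrow> zclosed C2 (affine_line p d)"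
  unfolding affine_line_eq_zeros
  by (intro zclosed_zeros polyfun_diff pf_mult pf_const polyfun_fst polyfun_snd)

lemma zirred_affine_line: "d \<noteq> 0 \<Longrightarrow> zirred C2 (affine_line p d)"
  by (intro zirred_if_polyfun_dichotomy zclosed_affine_line infinite_affine_line
      polyfun_dichotomy_affine_line)

lemma zdim_1_not_UNIV:
  assumes "zdim C2 X = 1" "zirred C2 X"
  shows "X \<noteq> UNIV"
proof
  assume X: "X = UNIV"
  have "(1::complex, 0::complex) \<noteq> 0"
    by (simp add: zero_prod_def)
  then have "affine_line 0 (1, 0) = X"
    using zdim_1_maximal[OF assms zirred_affine_line infinite_affine_line] X by blast
  moreover have "(0, 1) \<notin> affine_line 0 (1::complex, 0::complex)"
    by (auto simp: affine_line_def)
  ultimately show False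
    using X by auto
qed

definition sq_dist :: "complex \<times> complex \<Rightarrow> complex \<times> complex \<Rightarrow> complex" where
  "sq_dist c x = (fst x - fst c)^2 + (snd x - snd c)^2"

lemma circle_eq_sq_dist: "circle c r = {x. sq_dist c x = r^2}"
  by (simp add: circle_def sq_dist_def)

text \<open>The parametrisation \<open>s \<mapsto> c + ((s + r\<^sup>2/s)/2, (s - r\<^sup>2/s)/(2\<i>))\<close> identifies the circle with \<open>\<complex> - {0}\<close>;
  its inverse is \<open>x \<mapsto> (x\<^sub>1 - c\<^sub>1) + \<i>(x\<^sub>2 - c\<^sub>2)\<close>.\<close>

definition circle_param :: "complex \<times> complex \<Rightarrow> complex \<Rightarrow> complex \<Rightarrow> complex \<times> complex" where
  "circle_param c r s = (fst c + (s + r^2 / s) / 2, snd c + (s - r^2 / s) / (2 * \<i>))"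

lemma circle_eq_image: 
  assumes "r \<noteq> 0"
  shows "circle c r = circle_param c r ` (-{0})"
proof
  show "circle c r \<subseteq> circle_param c r ` (-{0})"
  proof
    fix z assume "z \<in> circle c r"
    then obtain a b where ab: "z = (a, b)" "(a - fst c)^2 + (b - snd c)^2 = r^2"
      by (cases z) (auto simp: circle_def)
    define s where "s = (a - fst c) + \<i> * (b - snd c)"
    have prod: "s * ((a - fst c) - \<i> * (b - snd c)) = r^2"
      using ab(2) by (simp add: s_def algebra_simps power2_eq_square)
    then have s: "s \<noteq> 0"
      using assms by auto
    then have rs: "r^2 / s = (a - fst c) - \<i> * (b - snd c)"
      using prod by (simp add: divide_eq_eq mult.commute)
    have "circle_param c r s = z"
      unfolding circle_param_def rs ab(1) by (simp add: s_def algebra_simps)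
    then show "z \<in> circle_param c r ` (-{0})"
      using s by blast
  qed
next
  have "((s + w) / 2)^2 + ((s - w) / (2 * \<i>))^2 = s * w" for s w :: complex
  proof -
    have "(2 * \<i>)^2 = (-4::complex)"
      by (simp add: power2_eq_square)
    then have "((s - w) / (2 * \<i>))^2 = - ((s - w)^2 / 4)"
      by (simp add: power_divide power_mult_distrib)
    then show ?thesis
      by (simp add: power_divide power2_eq_square field_simps)
  qed
  then show "circle_param c r ` (-{0}) \<subseteq> circle c r"
    unfolding circle_def circle_param_def by (simp add: image_subset_iff)
qed

lemma inj_on_circle_param: "inj_on (circle_param c r) (-{0})"
proof (rule inj_onI)
  fix s t assume "circle_param c r s = circle_param c r t"
  then have "s + r^2/s = t + r^2/t" "s - r^2/s = t - r^2/t"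
    by (auto simp: circle_param_def)
  then have "(s + r^2/s) + (s - r^2/s) = (t + r^2/t) + (t - r^2/t)"
    by simp
  then show "s = t"
    by simp
qed

lemma infinite_circle:
  assumes "r \<noteq> 0"
  shows "infinite (circle c r)"
proof
  assume "finite (circle c r)"
  then have "finite (-{0::complex})"
    unfolding circle_eq_image[OF assms] using finite_imageD inj_on_circle_param by blast
  then have "finite (insert 0 (-{0::complex}))"
    by simp
  then show False
    using infinite_UNIV_char_0[where 'a=complex] by (simp add: insert_absorb)
qed

lemma polyfun_dichotomy_circle:
  assumes "r \<noteq> 0"
  shows "polyfun_dichotomy (circle c r)"
  unfolding circle_eq_image[OF assms]
proof (rule polyfun_dichotomy_image, rule polyfun_comp_Laurent_curve)
  show "\<exists>q N. \<forall>s\<in>-{0}. fst (circle_param c r s) = poly q s / s^N"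
  proof (intro exI[of _ "[:r^2/2, fst c, 1/2:]"] exI[of _ 1] ballI)
    fix s :: complex assume "s \<in> -{0}"
    then show "fst (circle_param c r s) = poly [:r^2/2, fst c, 1/2:] s / s^1"
      by (simp add: circle_param_def eq_divide_eq)
  qed
  show "\<exists>q N. \<forall>s\<in>-{0}. snd (circle_param c r s) = poly q s / s^N"
  proof (intro exI[of _ "[:-(r^2/(2*\<i>)), snd c, 1/(2*\<i>):]"] exI[of _ 1] ballI)
    fix s :: complex assume "s \<in> -{0}"
    then show "snd (circle_param c r s) = poly [:-(r^2/(2*\<i>)), snd c, 1/(2*\<i>):] s / s^1"
      by (simp add: circle_param_def eq_divide_eq;
          simp add: algebra_simps power2_eq_square diff_divide_distrib add_divide_distrib)
  qed
qed auto

definition circle_fun :: "complex \<times> complex \<Rightarrow> complex \<Rightarrow> complex \<times> complex \<Rightarrow> complex" where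
  "circle_fun c r x = sq_dist c x - r^2"

lemma polyfun_circle_fun: "polyfun C2 (circle_fun c r)"
  unfolding circle_fun_def[abs_def] sq_dist_def
  by (intro polyfun_diff pf_add polyfun_power2 pf_const polyfun_fst polyfun_snd)

lemma circle_eq_zeros: "circle c r = {x. circle_fun c r x = 0}"
  by (simp add: circle_eq_sq_dist circle_fun_def)

lemma zclosed_circle: "zclosed C2 (circle c r)"
  unfolding circle_eq_zeros by (rule zclosed_zeros[OF polyfun_circle_fun])

lemma zirred_circle: "r \<noteq> 0 \<Longrightarrow> zirred C2 (circle c r)"
  by (intro zirred_if_polyfun_dichotomy zclosed_circle infinite_circle polyfun_dichotomy_circle)

section \<open>Complex rotations\<close>

definition rotate_about :: "complex \<times> complex \<Rightarrow> complex \<times> complex \<Rightarrow> complex \<Rightarrow> complex \<times> complex" where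
  "rotate_about c x t =
     (fst c + cos t * (fst x - fst c) - sin t * (snd x - snd c),
      snd c + sin t * (fst x - fst c) + cos t * (snd x - snd c))"

lemma rotate_about_0 [simp]: "rotate_about c x 0 = x"
  by (simp add: rotate_about_def)

lemma sq_dist_rotate_about [simp]: "sq_dist c (rotate_about c x t) = sq_dist c x"
proof -
  have lagrange: "(p + b * u - a * v - p)^2 + (q + a * u + b * v - q)^2 = (a^2 + b^2) * (u^2 + v^2)"
    for p q a b u v :: complex
    by (simp add: power2_eq_square algebra_simps)
  have "sq_dist c (rotate_about c x t) = ((sin t)^2 + (cos t)^2) * sq_dist c x"
    unfolding rotate_about_def sq_dist_def fst_conv snd_conv by (rule lagrange)
  then show ?thesis
    by simp
qed

lemma DERIV_poly2_rotate_about: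
  "((\<lambda>t. poly2 P (rotate_about c x t)) has_field_derivative
     poly2 (pderiv_x P) (rotate_about c x t) * - (snd (rotate_about c x t) - snd c)
     + poly2 (pderiv P) (rotate_about c x t) * (fst (rotate_about c x t) - fst c)) (at t)"
proof -
  have "((\<lambda>t. fst (rotate_about c x t)) has_field_derivative - (snd (rotate_about c x t) - snd c)) (at t)"
    and "((\<lambda>t. snd (rotate_about c x t)) has_field_derivative fst (rotate_about c x t) - fst c) (at t)"
    unfolding rotate_about_def by (auto intro!: derivative_eq_intros simp: algebra_simps)
  from DERIV_poly2_comp[OF this, of P] show ?thesis
    by simp
qed

lemma complex_cos_sin_eq:
  fixes \<alpha> \<beta> :: complex
  assumes "\<alpha>^2 + \<beta>^2 = 1"
  shows "\<exists>t. cos t = \<alpha> \<and> sin t = \<beta>"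
proof -
  define s where "s = \<alpha> + \<i> * \<beta>"
  have ss: "s * (\<alpha> - \<i> * \<beta>) = 1"
    using assms by (simp add: s_def algebra_simps power2_eq_square)
  then have s: "s \<noteq> 0"
    by auto
  have inv: "inverse s = \<alpha> - \<i> * \<beta>"
    using ss s by (simp add: field_simps)
  define t where "t = - \<i> * Ln s"
  have e1: "exp (\<i> * t) = s"
    using s by (simp add: t_def)
  then have e2: "exp (- (\<i> * t)) = \<alpha> - \<i> * \<beta>"
    using inv by (simp add: exp_minus)
  have "cos t = \<alpha>"
    unfolding cos_exp_eq e1 e2 by (simp add: s_def)
  moreover have "sin t = (s - (\<alpha> - \<i> * \<beta>)) / (2 * \<i>)"
    by (simp only: sin_exp_eq e1 e2)
  then have "sin t = \<beta>"
    by (simp add: s_def field_simps)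
  ultimately show ?thesis
    by blast
qed

text \<open>The rotation angle is read off from the inner product and the determinant of \<open>x - c\<close>
  and \<open>y - c\<close> (Lagrange's identity makes them a point of the unit circle after scaling).\<close>

lemma rotate_about_transitive:
  assumes "sq_dist c x = sq_dist c y" "sq_dist c x \<noteq> 0"
  shows "\<exists>t. rotate_about c x t = y"
proof -
  define k where "k = sq_dist c x"
  define v1 v2 w1 w2 where "v1 = fst x - fst c" "v2 = snd x - snd c" "w1 = fst y - fst c" "w2 = snd y - snd c"
  have k: "v1^2 + v2^2 = k" "w1^2 + w2^2 = k" "k \<noteq> 0"
    using assms by (simp_all add: k_def sq_dist_def v1_v2_w1_w2_def)
  define \<alpha> where "\<alpha> = (v1 * w1 + v2 * w2) / k"
  define \<beta> where "\<beta> = (v1 * w2 - v2 * w1) / k"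
  have "(v1 * w1 + v2 * w2)^2 + (v1 * w2 - v2 * w1)^2 = (v1^2 + v2^2) * (w1^2 + w2^2)"
    by (simp add: power2_eq_square algebra_simps)
  then have "\<alpha>^2 + \<beta>^2 = 1"
    using k by (simp add: \<alpha>_def \<beta>_def power_divide add_divide_distrib[symmetric] power2_eq_square)
  then obtain t where t: "cos t = \<alpha>" "sin t = \<beta>"
    using complex_cos_sin_eq by blast
  have "\<alpha> * v1 - \<beta> * v2 = ((v1 * w1 + v2 * w2) * v1 - (v1 * w2 - v2 * w1) * v2) / k"
    using k(3) by (simp add: \<alpha>_def \<beta>_def field_simps)
  also have "\<dots> = w1 * (v1^2 + v2^2) / k"
    by (simp add: power2_eq_square algebra_simps)
  finally have "\<alpha> * v1 - \<beta> * v2 = w1 * (v1^2 + v2^2) / k" .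
  moreover have "\<beta> * v1 + \<alpha> * v2 = ((v1 * w2 - v2 * w1) * v1 + (v1 * w1 + v2 * w2) * v2) / k"
    using k(3) by (simp add: \<alpha>_def \<beta>_def field_simps)
  moreover have "\<dots> = w2 * (v1^2 + v2^2) / k"
    by (simp add: power2_eq_square algebra_simps)
  ultimately have "\<alpha> * v1 - \<beta> * v2 = w1" "\<beta> * v1 + \<alpha> * v2 = w2"
    using k by simp_all
  then have "rotate_about c x t = y"
    using t by (simp add: rotate_about_def v1_v2_w1_w2_def prod_eq_iff algebra_simps)
  then show ?thesis
    by blast
qed

lemma DERIV_linear_zero:
  fixes \<phi> a :: "complex \<Rightarrow> complex"
  assumes \<phi>': "\<And>t. (\<phi> has_field_derivative a t * \<phi> t) (at t)"
    and a: "\<And>t. a field_differentiable at t" and "\<phi> 0 = 0"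
  shows "\<phi> t = 0"
proof -
  have "continuous_on UNIV a"
    using a field_differentiable_imp_continuous_at continuous_at_imp_continuous_on by blast
  then obtain A where A: "\<And>t. (A has_field_derivative a t) (at t)"
    using holomorphic_convex_primitive[of UNIV "{}" a] a by auto
  have "((\<lambda>t. \<phi> t * exp (- A t)) has_field_derivative 0) (at t within UNIV)" for t
    using A[of t] \<phi>'[of t] by (auto intro!: derivative_eq_intros simp: algebra_simps)
  then have "\<phi> t * exp (- A t) = \<phi> 0 * exp (- A 0)"
    using has_field_derivative_zero_constant[of UNIV "\<lambda>t. \<phi> t * exp (- A t)"] by auto
  then show ?thesis
    using \<open>\<phi> 0 = 0\<close> by simp
qed

text \<open>The derivative of \<open>f\<close> along the rotation field \<open>(c\<^sub>2 - y, x - c\<^sub>1)\<close> about \<open>c\<close>.\<close>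

definition rotation_deriv :: "complex \<times> complex \<Rightarrow> bpoly \<Rightarrow> bpoly" where
  "rotation_deriv c f = pderiv f * (var_x - [:[:fst c:]:]) - pderiv_x f * (var_y - [:[:snd c:]:])"

lemma poly2_rotation_deriv:
  "poly2 (rotation_deriv c f) y
     = poly2 (pderiv_x f) y * - (snd y - snd c) + poly2 (pderiv f) y * (fst y - fst c)"
  by (simp add: rotation_deriv_def algebra_simps)

text \<open>If \<open>f\<close> divides its derivative along the rotation field, then along every orbit
  \<open>\<phi>' = a \<phi>\<close>, so \<open>\<phi>\<close> vanishes identically as soon as it vanishes at one point.\<close>

lemma zero_set_rotate_about:
  assumes "f dvd rotation_deriv c f" "x \<in> zero_set f"
  shows "rotate_about c x t \<in> zero_set f"
proof -
  obtain q where q: "rotation_deriv c f = f * q"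
    using assms(1) by blast
  define \<phi> where "\<phi> t = poly2 f (rotate_about c x t)" for t
  define a where "a t = poly2 q (rotate_about c x t)" for t
  have "(\<phi> has_field_derivative a t * \<phi> t) (at t)" for t
    using DERIV_poly2_rotate_about[of f c x t] arg_cong[OF q, of "\<lambda>P. poly2 P (rotate_about c x t)"]
    unfolding \<phi>_def[abs_def] a_def poly2_rotation_deriv by (simp add: mult.commute)
  moreover have "a field_differentiable at t" for t
    using DERIV_poly2_rotate_about[of q c x t] unfolding a_def[abs_def] field_differentiable_def by blast
  moreover have "\<phi> 0 = 0"
    using assms(2) by (simp add: \<phi>_def zero_set_def)
  ultimately have "\<phi> t = 0"
    by (rule DERIV_linear_zero)
  then show ?thesis
    by (simp add: \<phi>_def zero_set_def)
qed

section \<open>Normal spaces and the ED correspondence of a curve\<close>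

definition det2 :: "complex \<times> complex \<Rightarrow> complex \<times> complex \<Rightarrow> complex" where
  "det2 v w = fst v * snd w - snd v * fst w"

lemma grad_in_normal_space:
  assumes "g \<in> vanishing C2 X"
  shows "(c * fst (grad g x), c * snd (grad g x)) \<in> normal_space X x"
  unfolding normal_space_def using assms
  by (intro CollectI exI[of _ "[c]"] exI[of _ "[g]"]) auto

lemma normal_space_orthogonal:
  assumes "\<And>g. g \<in> vanishing C2 X \<Longrightarrow> a * fst (grad g x) + b * snd (grad g x) = 0"
    and "v \<in> normal_space X x"
  shows "a * fst v + b * snd v = 0"
proof -
  obtain cs fs where v: "set fs \<subseteq> vanishing C2 X"
    "v = ((\<Sum>i<length fs. cs!i * fst (grad (fs!i) x)), (\<Sum>i<length fs. cs!i * snd (grad (fs!i) x)))"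
    using assms(2) unfolding normal_space_def by blast
  have "a * fst v + b * snd v = (\<Sum>i<length fs. cs!i * (a * fst (grad (fs!i) x) + b * snd (grad (fs!i) x)))"
    unfolding v(2) by (simp add: sum_distrib_left sum.distrib algebra_simps)
  also have "\<dots> = 0"
    using v(1) assms(1) by (intro sum.neutral) (auto dest: nth_mem)
  finally show ?thesis .
qed

lemma det2_eq_0_if_orthogonal:
  assumes "a * fst v + b * snd v = 0" "a * fst w + b * snd w = 0" "(a, b) \<noteq> (0, 0)"
  shows "det2 v w = 0"
proof (cases "a = 0")
  case True
  then show ?thesis
    using assms by (simp add: det2_def)
next
  case False
  have "a * det2 v w = (a * fst v) * snd w - snd v * (a * fst w)"
    by (simp add: det2_def algebra_simps)
  also have "\<dots> = 0"
    using assms(1,2) by (simp add: eq_neg_iff_add_eq_0[symmetric])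
  finally show ?thesis
    using False by simp
qed

lemma det2_reg_normal_space:
  assumes "zdim C2 X = 1" "x \<in> reg X" "v \<in> normal_space X x" "w \<in> normal_space X x"
  shows "det2 v w = 0"
  using assms unfolding reg_def cdim2_def det2_def by (auto split: if_splits)

lemma det2_eq_0_imp_parallel:
  assumes "det2 w v = 0" "w \<noteq> 0"
  shows "\<exists>s. v = (s * fst w, s * snd w)"
proof (cases "fst w = 0")
  case True
  then have "snd w \<noteq> 0"
    using assms(2) by (auto simp: zero_prod_def prod_eq_iff)
  then show ?thesis
    using assms(1) True by (intro exI[of _ "snd v / snd w"]) (auto simp: det2_def prod_eq_iff)
next
  case False
  then show ?thesis
    using assms(1) by (intro exI[of _ "fst v / fst w"]) (auto simp: det2_def prod_eq_iff field_simps)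
qed

lemma cdim2_span:
  assumes "w \<noteq> 0"
  shows "cdim2 (range (\<lambda>s. (s * fst w, s * snd w))) = 1"
proof -
  let ?N = "range (\<lambda>s. (s * fst w, s * snd w))"
  have "(1 * fst w, 1 * snd w) \<in> ?N" "(1 * fst w, 1 * snd w) \<noteq> (0, 0)"
    using assms by (auto simp: zero_prod_def prod_eq_iff)
  then have "\<not> ?N \<subseteq> {(0, 0)}"
    by blast
  moreover have "\<not> (\<exists>v\<in>?N. \<exists>u\<in>?N. fst v * snd u - snd v * fst u \<noteq> 0)"
    by (auto simp: algebra_simps)
  ultimately show ?thesis
    unfolding cdim2_def by (simp only: if_False)
qed

lemma normal_space_eq_span:
  assumes "w \<noteq> 0" "g \<in> vanishing C2 X" "grad g x = w"
    and "\<And>h. h \<in> vanishing C2 X \<Longrightarrow> det2 w (grad h x) = 0"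
  shows "normal_space X x = range (\<lambda>s. (s * fst w, s * snd w))"
proof
  show "normal_space X x \<subseteq> range (\<lambda>s. (s * fst w, s * snd w))"
  proof
    fix v assume "v \<in> normal_space X x"
    then have "- snd w * fst v + fst w * snd v = 0"
      using normal_space_orthogonal[of X "- snd w" x "fst w"] assms(4)
      by (auto simp: det2_def algebra_simps)
    then obtain s where "v = (s * fst w, s * snd w)"
      using det2_eq_0_imp_parallel[OF _ assms(1), of v] by (auto simp: det2_def algebra_simps)
    then show "v \<in> range (\<lambda>s. (s * fst w, s * snd w))"
      by blast
  qed
  show "range (\<lambda>s. (s * fst w, s * snd w)) \<subseteq> normal_space X x"
    unfolding assms(3)[symmetric] using grad_in_normal_space[OF assms(2), of _ x] by blast
qed

lemma reg_if_normal_space_span: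
  assumes "zdim C2 X = 1" "x \<in> X" "w \<noteq> 0" "normal_space X x = range (\<lambda>s. (s * fst w, s * snd w))"
  shows "x \<in> reg X"
  using assms cdim2_span by (simp add: reg_def)

lemma polyfun_C4_fst: "polyfun C2 g \<Longrightarrow> polyfun C4 (\<lambda>p. g (fst p))"
proof (induct rule: polyfun.induct)
  case (pf_coord f)
  then show ?case
    by (auto intro!: polyfun.pf_coord simp: C2_def C4_def)
qed (auto intro: polyfun.intros)

lemma polyfun_C4_snd: "polyfun C2 g \<Longrightarrow> polyfun C4 (\<lambda>p. g (snd p))"
proof (induct rule: polyfun.induct)
  case (pf_coord f)
  then show ?case
    by (auto intro!: polyfun.pf_coord simp: C2_def C4_def)
qed (auto intro: polyfun.intros)

lemma zclosed_C4_fst: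
  assumes "zclosed C2 X"
  shows "zclosed C4 {p. fst p \<in> X}"
proof -
  obtain F where F: "\<forall>f\<in>F. polyfun C2 f" "X = {x. \<forall>f\<in>F. f x = 0}"
    using assms by (auto simp: zclosed_def)
  then have "{p. fst p \<in> X} = {p. \<forall>h\<in>(\<lambda>f p. f (fst p)) ` F. h p = 0}"
    and "\<forall>h\<in>(\<lambda>f p. f (fst p)) ` F. polyfun C4 h"
    using polyfun_C4_fst by auto
  then show ?thesis
    unfolding zclosed_def by blast
qed

lemma zclosed_C4_snd:
  assumes "zclosed C2 X"
  shows "zclosed C4 {p. snd p \<in> X}"
proof -
  obtain F where F: "\<forall>f\<in>F. polyfun C2 f" "X = {x. \<forall>f\<in>F. f x = 0}"
    using assms by (auto simp: zclosed_def)
  then have "{p. snd p \<in> X} = {p. \<forall>h\<in>(\<lambda>f p. f (snd p)) ` F. h p = 0}"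
    and "\<forall>h\<in>(\<lambda>f p. f (snd p)) ` F. polyfun C4 h"
    using polyfun_C4_snd by auto
  then show ?thesis
    unfolding zclosed_def by blast
qed

text \<open>At a smooth point of a curve the normal space is a line, and it contains the gradient
  of every polynomial vanishing on the curve.\<close>

lemma ED_fiber_subset:
  assumes dim: "zdim C2 X = 1" and closed: "zclosed C2 X" and g: "g \<in> vanishing C2 X"
  shows "ED_fiber X u \<subseteq> {x \<in> X. det2 (fst u - fst x, snd u - snd x) (grad g x) = 0}"
proof -
  obtain P where P: "g = poly2 P"
    using g polyfun_C2_imp_poly2 by (auto simp: vanishing_def)
  let ?E = "{p. fst p \<in> X \<and> det2 (fst (snd p) - fst (fst p), snd (snd p) - snd (fst p)) (grad g (fst p)) = 0}"
  have "zclosed C4 {p. det2 (fst (snd p) - fst (fst p), snd (snd p) - snd (fst p)) (grad g (fst p)) = 0}"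
    unfolding P grad_poly2 det2_def fst_conv snd_conv
    by (intro zclosed_zeros polyfun_diff pf_mult polyfun_C4_fst polyfun_C4_snd polyfun_fst polyfun_snd
        polyfun_poly2)
  then have "zclosed C4 ?E"
    using zclosed_Int[OF zclosed_C4_fst[OF closed]] by (simp add: Collect_conj_eq)
  moreover have "(x, u) \<in> ?E"
    if x: "x \<in> reg X" and u: "(fst u - fst x, snd u - snd x) \<in> normal_space X x" for x u
  proof -
    have "(grad g x) \<in> normal_space X x"
      using grad_in_normal_space[OF g, of 1 x] by simp
    then show ?thesis
      using det2_reg_normal_space[OF dim x u] x by (simp add: reg_def)
  qed
  ultimately have "ED_corr X \<subseteq> ?E"
    unfolding ED_corr_def by (intro zcl_least) auto
  then show ?thesis
    by (auto simp: ED_fiber_def)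
qed

lemma tangent_affine_line:
  assumes x: "x \<in> affine_line p d" and g: "g \<in> vanishing C2 (affine_line p d)"
  shows "fst d * fst (grad g x) + snd d * snd (grad g x) = 0"
proof -
  obtain P where P: "g = poly2 P"
    using g polyfun_C2_imp_poly2 by (auto simp: vanishing_def)
  obtain s where s: "x = (fst p + s * fst d, snd p + s * snd d)"
    using x by (auto simp: affine_line_def)
  have "(fst x + t * fst d, snd x + t * snd d) \<in> affine_line p d" for t
    unfolding affine_line_def s by (intro CollectI exI[of _ "s + t"]) (simp add: algebra_simps)
  then have zero: "poly2 P (fst x + t * fst d, snd x + t * snd d) = 0" for t
    using g P by (auto simp: vanishing_def)
  have "((\<lambda>t. fst x + t * fst d) has_field_derivative fst d) (at 0)"
    and "((\<lambda>t. snd x + t * snd d) has_field_derivative snd d) (at 0)"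
    by (auto intro!: derivative_eq_intros)
  from DERIV_poly2_comp[OF this, of P]
  have "((\<lambda>t. 0) has_field_derivative
      poly2 (pderiv_x P) x * fst d + poly2 (pderiv P) x * snd d) (at 0)"
    using zero by simp
  then have "poly2 (pderiv_x P) x * fst d + poly2 (pderiv P) x * snd d = 0"
    using DERIV_unique DERIV_const by blast
  then show ?thesis
    by (simp add: P grad_poly2 algebra_simps)
qed

lemma tangent_circle:
  assumes x: "x \<in> circle c r" and g: "g \<in> vanishing C2 (circle c r)"
  shows "det2 (fst x - fst c, snd x - snd c) (grad g x) = 0"
proof -
  obtain P where P: "g = poly2 P"
    using g polyfun_C2_imp_poly2 by (auto simp: vanishing_def)
  have "rotate_about c x t \<in> circle c r" for t
    using x by (simp add: circle_eq_sq_dist)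
  then have "poly2 P (rotate_about c x t) = 0" for t
    using g P by (auto simp: vanishing_def)
  then have "((\<lambda>t. 0) has_field_derivative poly2 (pderiv_x P) x * - (snd x - snd c)
      + poly2 (pderiv P) x * (fst x - fst c)) (at 0)"
    using DERIV_poly2_rotate_about[of P c x 0] by simp
  then have "poly2 (pderiv_x P) x * - (snd x - snd c) + poly2 (pderiv P) x * (fst x - fst c) = 0"
    using DERIV_unique DERIV_const by blast
  then show ?thesis
    by (simp add: P grad_poly2 det2_def algebra_simps)
qed

section \<open>Curves with positive-dimensional ED fibers\<close>

definition isotropic :: "complex \<times> complex \<Rightarrow> bool" where
  "isotropic d \<longleftrightarrow> d \<noteq> 0 \<and> (fst d)^2 + (snd d)^2 = 0"

lemma isotropic_i: "isotropic (\<i>, -1)" "isotropic (\<i>, 1)"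
  by (simp_all add: isotropic_def zero_prod_def power2_eq_square)

lemma normal_space_isotropic_line:
  assumes "isotropic d" "x \<in> affine_line p d"
  shows "normal_space (affine_line p d) x = range (\<lambda>s. (s * fst d, s * snd d))"
proof (rule normal_space_eq_span)
  let ?l = "\<lambda>z. fst d * (fst z - fst p) + snd d * (snd z - snd p)"
  show "d \<noteq> 0"
    using assms(1) by (simp add: isotropic_def)
  have "?l (fst p + t * fst d, snd p + t * snd d) = t * ((fst d)^2 + (snd d)^2)" for t
    by (simp add: power2_eq_square algebra_simps)
  then show "?l \<in> vanishing C2 (affine_line p d)"
    using assms(1) unfolding vanishing_def isotropic_def affine_line_def
    by (auto intro!: pf_add pf_mult pf_const polyfun_diff polyfun_fst polyfun_snd)
  have "((\<lambda>t. ?l (t, snd x)) has_field_derivative fst d) (at (fst x))"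
    and "((\<lambda>t. ?l (fst x, t)) has_field_derivative snd d) (at (snd x))"
    by (auto intro!: derivative_eq_intros)
  then show "grad ?l x = d"
    unfolding grad_def by (simp add: DERIV_imp_deriv)
  fix h assume "h \<in> vanishing C2 (affine_line p d)"
  from tangent_affine_line[OF assms(2) this]
  show "det2 d (grad h x) = 0"
    using assms(1) by (intro det2_eq_0_if_orthogonal[where a = "fst d" and b = "snd d"])
      (auto simp: isotropic_def power2_eq_square zero_prod_def)
qed

lemma affine_line_iff_diff_parallel:
  assumes "x \<in> affine_line p d"
  shows "u \<in> affine_line p d \<longleftrightarrow> (fst u - fst x, snd u - snd x) \<in> range (\<lambda>s. (s * fst d, s * snd d))"
proof -
  obtain t where t: "x = (fst p + t * fst d, snd p + t * snd d)"
    using assms by (auto simp: affine_line_def)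
  show ?thesis
  proof
    assume "u \<in> affine_line p d"
    then obtain t' where "u = (fst p + t' * fst d, snd p + t' * snd d)"
      by (auto simp: affine_line_def)
    then have "(fst u - fst x, snd u - snd x) = ((t' - t) * fst d, (t' - t) * snd d)"
      using t by (simp add: algebra_simps)
    then show "(fst u - fst x, snd u - snd x) \<in> range (\<lambda>s. (s * fst d, s * snd d))"
      by blast
  next
    assume "(fst u - fst x, snd u - snd x) \<in> range (\<lambda>s. (s * fst d, s * snd d))"
    then obtain s where "fst u - fst x = s * fst d" "snd u - snd x = s * snd d"
      by auto
    then have "u = (fst p + (t + s) * fst d, snd p + (t + s) * snd d)"
      using t by (simp add: prod_eq_iff algebra_simps)
    then show "u \<in> affine_line p d"
      by (auto simp: affine_line_def)
  qed
qed

text \<open>For an isotropic line the normal direction is the tangent direction, so every point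
  of the line lies in the normal line through every other point.\<close>

lemma Sigma_inf_isotropic_line:
  assumes d: "isotropic d" and dim: "zdim C2 (affine_line p d) = 1"
  shows "Sigma_inf (affine_line p d) = affine_line p d"
proof -
  let ?L = "affine_line p d"
  have d0: "d \<noteq> 0"
    using d by (simp add: isotropic_def)
  have "reg ?L = ?L"
    using reg_if_normal_space_span[OF dim _ d0 normal_space_isotropic_line[OF d]]
    by (auto simp: reg_def)
  then have "x \<in> reg ?L \<and> (fst u - fst x, snd u - snd x) \<in> normal_space ?L x \<longleftrightarrow> x \<in> ?L \<and> u \<in> ?L"
    for x u
    using affine_line_iff_diff_parallel[of x p d u] normal_space_isotropic_line[OF d, of x p] by auto
  then have "{(x, u). x \<in> reg ?L \<and> (fst u - fst x, snd u - snd x) \<in> normal_space ?L x} = ?L \<times> ?L"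
    by auto
  moreover have "zclosed C4 (?L \<times> ?L)"
    using zclosed_Int[OF zclosed_C4_fst zclosed_C4_snd] zclosed_affine_line[OF d0]
    by (simp add: Collect_conj_eq[symmetric] mem_Times_iff[symmetric] Times_eq_cancel2)
  ultimately have "ED_corr ?L = ?L \<times> ?L"
    unfolding ED_corr_def by (simp add: zcl_eq)
  then have "ED_fiber ?L u = (if u \<in> ?L then ?L else {})" for u
    unfolding ED_fiber_def by auto
  then show ?thesis
    using dim by (auto simp: Sigma_inf_def zdim_empty)
qed

lemma circle_fun_vanishing: "circle_fun c r \<in> vanishing C2 (circle c r)"
  by (simp add: vanishing_def polyfun_circle_fun circle_eq_zeros)

lemma grad_circle_fun: "grad (circle_fun c r) x = (2 * (fst x - fst c), 2 * (snd x - snd c))"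
proof -
  have "((\<lambda>t. circle_fun c r (t, snd x)) has_field_derivative 2 * (fst x - fst c)) (at (fst x))"
    and "((\<lambda>t. circle_fun c r (fst x, t)) has_field_derivative 2 * (snd x - snd c)) (at (snd x))"
    unfolding circle_fun_def sq_dist_def by (auto intro!: derivative_eq_intros)
  then show ?thesis
    unfolding grad_def by (simp add: DERIV_imp_deriv)
qed

lemma normal_space_circle:
  assumes "r \<noteq> 0" "x \<in> circle c r"
  shows "normal_space (circle c r) x
    = range (\<lambda>s. (s * (2 * (fst x - fst c)), s * (2 * (snd x - snd c))))"
proof -
  have "grad (circle_fun c r) x \<noteq> 0"
    using assms by (auto simp: grad_circle_fun circle_def zero_prod_def)
  moreover have "det2 (grad (circle_fun c r) x) (grad h x) = 0"
    if "h \<in> vanishing C2 (circle c r)" for h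
  proof -
    have "det2 (grad (circle_fun c r) x) (grad h x) = 2 * det2 (fst x - fst c, snd x - snd c) (grad h x)"
      by (simp add: grad_circle_fun det2_def algebra_simps)
    then show ?thesis
      using tangent_circle[OF assms(2) that] by simp
  qed
  ultimately show ?thesis
    using normal_space_eq_span[OF _ circle_fun_vanishing refl] by (simp add: grad_circle_fun)
qed

text \<open>The points \<open>x\<close> of the circle whose normal line passes through \<open>u \<noteq> c\<close> lie on the line
  through \<open>c\<close> and \<open>u\<close>.\<close>

lemma finite_circle_normal_through:
  assumes "r \<noteq> 0" "u \<noteq> c"
  shows "finite {x \<in> circle c r. det2 (fst u - fst x, snd u - snd x) (grad (circle_fun c r) x) = 0}"
proof -
  let ?w = "(fst u - fst c, snd u - snd c)"
  let ?Q = "[:- (r^2), 0, sq_dist c u:]"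
  have w: "?w \<noteq> 0"
    using assms(2) by (auto simp: zero_prod_def prod_eq_iff)
  have "{x \<in> circle c r. det2 (fst u - fst x, snd u - snd x) (grad (circle_fun c r) x) = 0}
      \<subseteq> (\<lambda>t. (fst c + t * fst ?w, snd c + t * snd ?w)) ` {t. poly ?Q t = 0}"
  proof safe
    fix x assume x: "x \<in> circle c r"
      and normal: "det2 (fst u - fst x, snd u - snd x) (grad (circle_fun c r) x) = 0"
    have "det2 (fst u - fst x, snd u - snd x) (grad (circle_fun c r) x)
        = 2 * det2 ?w (fst x - fst c, snd x - snd c)"
      by (simp add: grad_circle_fun det2_def algebra_simps)
    then have "det2 ?w (fst x - fst c, snd x - snd c) = 0"
      using normal by simp
    then obtain t where "(fst x - fst c, snd x - snd c) = (t * fst ?w, t * snd ?w)"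
      using det2_eq_0_imp_parallel[OF _ w] by blast
    then have tx: "fst x - fst c = t * (fst u - fst c)" and ty: "snd x - snd c = t * (snd u - snd c)"
      by simp_all
    have "t^2 * sq_dist c u = (t * (fst u - fst c))^2 + (t * (snd u - snd c))^2"
      by (simp only: sq_dist_def power_mult_distrib distrib_left)
    also have "\<dots> = r^2"
      using x by (simp flip: tx ty add: circle_def)
    finally have "poly ?Q t = 0"
      by (simp add: algebra_simps power2_eq_square)
    moreover have "x = (fst c + t * fst ?w, snd c + t * snd ?w)"
      using tx ty by (simp add: prod_eq_iff algebra_simps)
    ultimately show "x \<in> (\<lambda>t. (fst c + t * fst ?w, snd c + t * snd ?w)) ` {t. poly ?Q t = 0}"
      by blast
  qed
  moreover have "finite {t. poly ?Q t = 0}"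
    using assms(1) poly_roots_finite[of ?Q] by simp
  ultimately show ?thesis
    using finite_subset by blast
qed

lemma ED_fiber_circle_center:
  assumes r: "r \<noteq> 0" and dim: "zdim C2 (circle c r) = 1"
  shows "ED_fiber (circle c r) c = circle c r"
proof
  show "ED_fiber (circle c r) c \<subseteq> circle c r"
    using ED_fiber_subset[OF dim zclosed_circle circle_fun_vanishing] by blast
next
  show "circle c r \<subseteq> ED_fiber (circle c r) c"
  proof
    fix x assume x: "x \<in> circle c r"
    have "(2 * (fst x - fst c), 2 * (snd x - snd c)) \<noteq> 0"
      using x r by (auto simp: circle_def zero_prod_def)
    then have "x \<in> reg (circle c r)"
      by (rule reg_if_normal_space_span[OF dim x]) (simp add: normal_space_circle[OF r x])
    moreover have "(fst c - fst x, snd c - snd x) \<in> normal_space (circle c r) x"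
      unfolding normal_space_circle[OF r x]
      by (rule range_eqI[where x = "- 1 / 2"]) (simp add: algebra_simps)
    ultimately have "(x, c) \<in> {(x, u). x \<in> reg (circle c r)
        \<and> (fst u - fst x, snd u - snd x) \<in> normal_space (circle c r) x}"
      by simp
    then show "x \<in> ED_fiber (circle c r) c"
      unfolding ED_fiber_def ED_corr_def by (simp add: subsetD[OF zcl_superset])
  qed
qed

lemma Sigma_inf_circle:
  assumes r: "r \<noteq> 0" and dim: "zdim C2 (circle c r) = 1"
  shows "Sigma_inf (circle c r) = {c}"
proof -
  have "c \<in> Sigma_inf (circle c r)"
    using dim ED_fiber_circle_center[OF r dim] by (simp add: Sigma_inf_def)
  moreover have "u \<notin> Sigma_inf (circle c r)" if "u \<noteq> c" for u
  proof -
    have "finite (ED_fiber (circle c r) u)"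
      using ED_fiber_subset[OF dim zclosed_circle circle_fun_vanishing] finite_circle_normal_through[OF r that]
        finite_subset by blast
    then show ?thesis
      using zdim_lt_1_if_finite by (simp add: Sigma_inf_def not_le)
  qed
  ultimately show ?thesis
    by blast
qed

text \<open>At a point \<open>x\<close> of the fiber over \<open>u\<close>, the vector \<open>u - x\<close> is normal, i.e. the rotation
  field about \<open>u\<close> is tangent; so if the fiber is infinite, \<open>f\<close> divides its derivative along
  that field.\<close>

lemma Sigma_inf_imp_dvd_rotation_deriv:
  assumes f: "irreducible f" and X: "X = zero_set f" and dim: "zdim C2 X = 1"
    and u: "u \<in> Sigma_inf X"
  shows "f dvd rotation_deriv u f"
proof (rule irreducible_dvd_if_infinite_common_zeros[OF f])
  have van: "poly2 f \<in> vanishing C2 X"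
    using X by (simp add: vanishing_def polyfun_poly2 zero_set_def)
  have "ED_fiber X u \<subseteq> zero_set f \<inter> zero_set (rotation_deriv u f)"
    using ED_fiber_subset[OF dim _ van, of u] X zclosed_zero_set
    by (auto simp: grad_poly2 det2_def poly2_rotation_deriv zero_set_def algebra_simps)
  then show "zcl C2 (ED_fiber X u) \<subseteq> zero_set f \<inter> zero_set (rotation_deriv u f)"
    by (intro zcl_least zclosed_Int zclosed_zero_set)
  show "infinite (zcl C2 (ED_fiber X u))"
    using infinite_zcl_if_zdim_ge_1 u by (simp add: Sigma_inf_def)
qed

lemma sq_dist_eq_0_imp_isotropic_lines:
  assumes "sq_dist u x = 0"
  shows "x \<in> affine_line u (\<i>, -1) \<union> affine_line u (\<i>, 1)"
proof -
  let ?a = "fst x - fst u" and ?b = "snd x - snd u"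
  have "(?a + \<i> * ?b) * (?a - \<i> * ?b) = 0"
    using assms by (simp add: sq_dist_def algebra_simps power2_eq_square)
  then consider "?a + \<i> * ?b = 0" | "?a - \<i> * ?b = 0"
    by auto
  then show ?thesis
  proof cases
    case 1
    then have "x = (fst u + (- ?b) * \<i>, snd u + (- ?b) * -1)"
      by (auto simp: prod_eq_iff algebra_simps)
    then show ?thesis
      unfolding affine_line_def by (intro UnI1 CollectI exI[of _ "- ?b"]) simp
  next
    case 2
    then have "x = (fst u + ?b * \<i>, snd u + ?b * 1)"
      by (auto simp: prod_eq_iff algebra_simps)
    then show ?thesis
      unfolding affine_line_def by (intro UnI2 CollectI exI[of _ "?b"]) simp
  qed
qed

lemma circle_subset_if_rotation_invariant:
  assumes inv: "\<And>x t. x \<in> X \<Longrightarrow> rotate_about u x t \<in> X"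
    and x: "x \<in> X" "sq_dist u x \<noteq> 0"
  shows "\<exists>r. r \<noteq> 0 \<and> circle u r \<subseteq> X"
proof -
  define r where "r = csqrt (sq_dist u x)"
  have r: "r^2 = sq_dist u x" "r \<noteq> 0"
    using x(2) by (auto simp: r_def)
  have "y \<in> X" if "y \<in> circle u r" for y
  proof -
    have "sq_dist u x = sq_dist u y"
      using that r by (simp add: circle_eq_sq_dist)
    then obtain t where "rotate_about u x t = y"
      using rotate_about_transitive x(2) by blast
    then show ?thesis
      using inv[OF x(1)] by blast
  qed
  then show ?thesis
    using r(2) by blast
qed

text \<open>A curve that meets some circle \<open>sq_dist u x = r\<^sup>2\<close> with \<open>r \<noteq> 0\<close> contains it; otherwise it lies in
  the two isotropic lines through \<open>u\<close>.\<close>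

lemma rotation_invariant_curve:
  assumes irr: "zirred C2 X" and dim: "zdim C2 X = 1"
    and inv: "\<And>x t. x \<in> X \<Longrightarrow> rotate_about u x t \<in> X"
  shows "(\<exists>r. r \<noteq> 0 \<and> X = circle u r) \<or> X = affine_line u (\<i>, -1) \<or> X = affine_line u (\<i>, 1)"
proof (cases "\<exists>x\<in>X. sq_dist u x \<noteq> 0")
  case True
  then obtain r where "r \<noteq> 0" "circle u r \<subseteq> X"
    using circle_subset_if_rotation_invariant[OF inv] by blast
  then show ?thesis
    using zdim_1_maximal[OF dim irr zirred_circle infinite_circle] by blast
next
  case False
  have closed: "zclosed C2 X"
    using irr by (simp add: zirred_def)
  then have inf: "infinite X"
    using infinite_zcl_if_zdim_ge_1[of X] dim by (simp add: zcl_eq)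
  have "X \<subseteq> affine_line u (\<i>, -1) \<union> affine_line u (\<i>, 1)"
    using False sq_dist_eq_0_imp_isotropic_lines by blast
  moreover have "zclosed C2 (affine_line u (\<i>, -1))" "zclosed C2 (affine_line u (\<i>, 1))"
    by (simp_all add: zclosed_affine_line zero_prod_def)
  ultimately have "X \<subseteq> affine_line u (\<i>, -1) \<or> X \<subseteq> affine_line u (\<i>, 1)"
    using irr unfolding zirred_def by blast
  then show ?thesis
    using polyfun_dichotomy_subset_eq[OF closed inf _ polyfun_dichotomy_affine_line] by blast
qed

lemma Sigma_inf_nonempty_imp_circle_or_isotropic_line:
  assumes X: "irred_curve X" and u: "u \<in> Sigma_inf X"
  shows "(\<exists>r. r \<noteq> 0 \<and> X = circle u r) \<or> line_dir (\<i>, -1) X \<or> line_dir (\<i>, 1) X"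
proof -
  have irr: "zirred C2 X" and dim: "zdim C2 X = 1"
    using X by (auto simp: irred_curve_def)
  have "infinite X"
    using infinite_zcl_if_zdim_ge_1[of X] dim irr by (simp add: zcl_eq zirred_def)
  then obtain f where f: "irreducible f" "X = zero_set f"
    using zirred_eq_zero_set_irreducible[OF irr zdim_1_not_UNIV[OF dim irr]] by blast
  have "rotate_about u x t \<in> X" if "x \<in> X" for x t
    using zero_set_rotate_about[OF Sigma_inf_imp_dvd_rotation_deriv[OF f dim u]] that f(2) by simp
  then show ?thesis
    using rotation_invariant_curve[OF irr dim] unfolding line_dir_iff by blast
qed

theorem mainTheorem14:
  fixes X :: "(complex \<times> complex) set"
  assumes "irred_curve X"
  shows "(zdim C2 (Sigma_inf X) = 1 \<longleftrightarrow> (line_dir (\<i>, -1) X \<or> line_dir (\<i>, 1) X))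
    \<and> ((line_dir (\<i>, -1) X \<or> line_dir (\<i>, 1) X) \<longrightarrow> Sigma_inf X = X)
    \<and> (zdim C2 (Sigma_inf X) = 0 \<longleftrightarrow> (\<exists>c r. r \<noteq> 0 \<and> X = circle c r))
    \<and> (\<forall>c r. r \<noteq> 0 \<and> X = circle c r \<longrightarrow> Sigma_inf X = {c})
    \<and> (\<not> (line_dir (\<i>, -1) X \<or> line_dir (\<i>, 1) X) \<and> \<not> (\<exists>c r. r \<noteq> 0 \<and> X = circle c r)
         \<longrightarrow> Sigma_inf X = {})"
proof -
  let ?line = "line_dir (\<i>, -1) X \<or> line_dir (\<i>, 1) X"
  let ?circle = "\<exists>c r. r \<noteq> 0 \<and> X = circle c r"
  have dim: "zdim C2 X = 1"
    using assms by (simp add: irred_curve_def)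
  have line: "Sigma_inf X = X" if ?line
    using that Sigma_inf_isotropic_line isotropic_i dim unfolding line_dir_iff by blast
  have circle: "Sigma_inf X = {c}" if "r \<noteq> 0" "X = circle c r" for c r
    using Sigma_inf_circle that dim by blast
  have neither: "Sigma_inf X = {}" if "\<not> ?line" "\<not> ?circle"
    using Sigma_inf_nonempty_imp_circle_or_isotropic_line[OF assms] that by blast
  have singleton: "zdim C2 {c} = 0" for c
    by (rule zdim_finite) auto
  have not_circle: "\<not> ?circle" if ?line
  proof
    assume ?circle
    then obtain c r where "r \<noteq> 0" "X = circle c r"
      by blast
    then have "X = {c}"
      using line[OF that] circle by simp
    then show False
      using dim singleton by simp
  qed
  consider ?line | c r where "\<not> ?line" "r \<noteq> 0" "X = circle c r" | "\<not> ?line" "\<not> ?circle"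
    by blast
  then show ?thesis
  proof cases
    case 1
    then show ?thesis
      using line[OF 1] not_circle[OF 1] dim by auto
  next
    case (2 c r)
    then have ?circle
      by blast
    with 2 show ?thesis
      using circle singleton by auto
  next
    case 3
    then show ?thesis
      using neither zdim_empty by auto
  qed
qed

end
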